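(* Let $1<p\le\frac N2$ and $C_{N,p}=\frac{N(p-1)(N-2p)}{p^2}$. Then for every complex-valued $u\in C_0^\infty(\mathbb{R}^N\setminus\{0\})$, $$\begin{aligned}\int_{\mathbb{R}^N}|\Delta u|^p dx&=C_{N,p}^p\int_{\mathbb{R}^N}\frac{|u|^p}{|x|^{2p}}dx+\int_{\mathbb{R}^N}C_p\left(\Delta u,\;\Delta u+\frac{C_{N,p}}{|x|^2}u\right)dx\\&\quad+p(p-1)C_{N,p}^{p-1}\int_{\mathbb{R}^N}\frac{|u|^{p-2}}{|x|^{2(p-1)}}\left|\nabla|u|+\frac{N-2p}{p}|u|\frac{x}{|x|^2}\right|^2dx\\&\quad+pC_{N,p}^{p-1}\int_{\mathbb{R}^N}\frac{|u|^{p-2}}{|x|^{2(p-1)}}\left(|\nabla u|^2-|\nabla|u||^2\right)dx.\end{aligned}$$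
   Context: $\Delta$ is the Euclidean Laplacian, $\nabla$ the Euclidean gradient, $|\cdot|$ the Euclidean norm (for complex vectors $|\nabla u|^2=\sum_j|\partial_ju|^2$). For $1<p<\infty$ and $\xi,\eta\in\mathbb{C}$, $C_p(\xi,\eta):=|\xi|^p-|\xi-\eta|^p-p|\xi-\eta|^{p-2}\mathrm{Re}\big((\xi-\eta)\overline{\eta}\big)\ (\ge0)$. *)

theory Defs
  imports "HOL-Analysis.Analysis"
begin

definition partial :: "'a::euclidean_space \<Rightarrow> ('a \<Rightarrow> 'b::real_normed_vector) \<Rightarrow> 'a \<Rightarrow> 'b" where
  "partial i f x = vector_derivative (\<lambda>t. f (x + t *\<^sub>R i)) (at 0)"

fun iter_partial :: "'a::euclidean_space list \<Rightarrow> ('a \<Rightarrow> 'b::real_normed_vector) \<Rightarrow> 'a \<Rightarrow> 'b" where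
  "iter_partial [] f = f"
| "iter_partial (i # is) f = partial i (iter_partial is f)"

definition smooth_fun :: "('a::euclidean_space \<Rightarrow> 'b::real_normed_vector) \<Rightarrow> bool" where
  "smooth_fun f \<longleftrightarrow>
     (\<forall>is. set is \<subseteq> Basis \<longrightarrow>
        continuous_on UNIV (iter_partial is f) \<and>
        (\<forall>i\<in>Basis. \<forall>x. (\<lambda>t. iter_partial is f (x + t *\<^sub>R i)) differentiable (at 0)))"

definition C0inf_punctured :: "('a::euclidean_space \<Rightarrow> 'b::real_normed_vector) \<Rightarrow> bool" where
  "C0inf_punctured u \<longleftrightarrow> smooth_fun u \<and> compact (closure {x. u x \<noteq> 0})
      \<and> 0 \<notin> closure {x. u x \<noteq> 0}"

definition laplacian :: "('a::euclidean_space \<Rightarrow> 'b::real_normed_vector) \<Rightarrow> 'a \<Rightarrow> 'b" where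
  "laplacian u x = (\<Sum>i\<in>Basis. partial i (partial i u) x)"

definition grad :: "('a::euclidean_space \<Rightarrow> real) \<Rightarrow> 'a \<Rightarrow> 'a" where
  "grad f x = (\<Sum>i\<in>Basis. partial i f x *\<^sub>R i)"

definition grad_norm_sq :: "('a::euclidean_space \<Rightarrow> complex) \<Rightarrow> 'a \<Rightarrow> real" where
  "grad_norm_sq u x = (\<Sum>i\<in>Basis. (cmod (partial i u x))\<^sup>2)"

definition Cp :: "real \<Rightarrow> complex \<Rightarrow> complex \<Rightarrow> real" where
  "Cp p \<xi> \<eta> = cmod \<xi> powr p - cmod (\<xi> - \<eta>) powr p
     - p * cmod (\<xi> - \<eta>) powr (p - 2) * Re ((\<xi> - \<eta>) * cnj \<eta>)"

end

theory Submission
  imports Defs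
begin

(* Write s = |u|^2 and R_e = Re (conj u * d_e u) = d_e s / 2. The identity comes from two vector
   fields with compact support in R^N - {0}, whose divergences therefore integrate to zero:
     |x|^(2-2p) |u|^(p-2) Re (conj u * grad u)   and   |x|^(-2p) |u|^p x.
   Expanding the divergences gives two linear relations between the integrals of
     |x|^(2-2p) |u|^(p-2) |grad u|^2,   |x|^(2-2p) |u|^(p-2) |grad |u||^2,
     |x|^(-2p) |u|^(p-1) x . grad |u|,   |x|^(2-2p) |u|^(p-2) Re (conj u * Lap u),   |u|^p / |x|^(2p),
   and every integrand of the theorem is pointwise a combination of these five; the value of
   C_{N,p} is exactly what makes the coefficients agree. For p < 2 the weight |u|^(p-2) is singular
   on the zero set of u, so both fields are regularised by powers of s + eps. As eps -> 0 all terms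
   converge dominatedly, except the gradient part of the first divergence, which is only known to
   be nonnegative: Fatou's lemma first shows that its limit is integrable. *)

lemma iter_partial_append: "iter_partial (is @ [i]) f = iter_partial is (partial i f)"
  by (induction "is") auto

lemma smooth_fun_partial:
  assumes "smooth_fun f" "i \<in> Basis"
  shows "smooth_fun (partial i f)"
  unfolding smooth_fun_def
proof (intro allI impI)
  fix "is" :: "'a list"
  assume "set is \<subseteq> Basis"
  with assms(2) have "set (is @ [i]) \<subseteq> Basis" by auto
  from assms(1)[unfolded smooth_fun_def, rule_format, OF this]
  show "continuous_on UNIV (iter_partial is (partial i f)) \<and>
        (\<forall>j\<in>Basis. \<forall>x. (\<lambda>t. iter_partial is (partial i f) (x + t *\<^sub>R j)) differentiable at 0)"
    unfolding iter_partial_append .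
qed

lemma smooth_fun_continuous_on:
  assumes "smooth_fun f"
  shows "continuous_on A f"
proof -
  from assms[unfolded smooth_fun_def, rule_format, of "[]"]
  have "continuous_on UNIV f" by simp
  then show ?thesis by (rule continuous_on_subset) simp
qed

lemma smooth_fun_has_vector_derivative:
  assumes "smooth_fun f" "i \<in> Basis"
  shows "((\<lambda>t. f (x + t *\<^sub>R i)) has_vector_derivative partial i f x) (at 0)"
proof -
  from assms(1)[unfolded smooth_fun_def, rule_format, of "[]"] assms(2)
  have "(\<lambda>t. f (x + t *\<^sub>R i)) differentiable (at 0)" by simp
  then show ?thesis unfolding partial_def by (rule vector_derivative_works[THEN iffD1])
qed

lemma has_vector_derivative_line_vanishing:
  fixes H :: "'a::real_normed_vector \<Rightarrow> 'b::real_normed_vector"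
  assumes "open V" "x \<in> V" "\<And>y. y \<in> V \<Longrightarrow> H y = 0"
  shows "((\<lambda>t. H (x + t *\<^sub>R i)) has_vector_derivative 0) (at 0)"
proof (rule has_vector_derivative_transform_within_open)
  show "open ((\<lambda>t. x + t *\<^sub>R i) -` V)"
    by (intro open_vimage assms continuous_intros)
  show "0 \<in> (\<lambda>t. x + t *\<^sub>R i) -` V" using assms(2) by simp
  show "((\<lambda>t. 0) has_vector_derivative 0) (at 0)" by (rule has_vector_derivative_const)
qed (use assms(3) in simp)

lemma partial_eq_0_if_vanishing:
  assumes "open V" "x \<in> V" "\<And>y. y \<in> V \<Longrightarrow> H y = 0"
  shows "partial i H x = 0"
  unfolding partial_def
  using has_vector_derivative_line_vanishing[OF assms] by (rule vector_derivative_at)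

lemma sq_powr:
  assumes "0 \<le> (v::real)"
  shows "(v\<^sup>2) powr a = v powr (2 * a)"
proof -
  have "(v\<^sup>2) powr a = (v powr 2) powr a" using assms by simp
  also have "\<dots> = v powr (2 * a)" by (rule powr_powr)
  finally show ?thesis .
qed

lemma sq_powr_half: "0 \<le> (v::real) \<Longrightarrow> (v\<^sup>2) powr (a / 2) = v powr a"
  using sq_powr[of v "a / 2"] by simp

lemma norm_sq_powr_minus: "((norm y)\<^sup>2) powr (- a) = 1 / norm y powr (2 * a)"
proof -
  have "((norm y)\<^sup>2) powr (- a) = norm y powr (- (2 * a))"
    using sq_powr[OF norm_ge_zero, of y "- a"] by simp
  then show ?thesis by (simp add: powr_minus_divide)
qed

lemma mult_powr_eq: "0 \<le> (s::real) \<Longrightarrow> a + 1 = b \<Longrightarrow> s * s powr a = s powr b"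
  by (cases "s = 0") (auto simp: powr_add)

lemma powr_divide_self: "0 < (s::real) \<Longrightarrow> a + 1 = b \<Longrightarrow> s powr b / s = s powr a"
  using mult_powr_eq[of s a b] by (auto simp: field_simps)

lemma norm_add_scaleR_sq:
  fixes g y :: "'a::real_inner"
  shows "(norm (g + k *\<^sub>R y))\<^sup>2 = (norm g)\<^sup>2 + 2 * k * (g \<bullet> y) + k\<^sup>2 * (norm y)\<^sup>2"
  unfolding power2_norm_eq_inner
  by (simp add: inner_add_left inner_add_right inner_commute power2_eq_square algebra_simps)

lemma inner_sum_Basis_scaleR:
  fixes f :: "'a::euclidean_space \<Rightarrow> real"
  shows "(\<Sum>e\<in>Basis. f e *\<^sub>R e) \<bullet> y = (\<Sum>e\<in>Basis. f e * (y \<bullet> e))"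
  unfolding inner_sum_left inner_scaleR_left by (simp add: inner_commute)

lemma norm_sum_Basis_sq:
  fixes f :: "'a::euclidean_space \<Rightarrow> real"
  shows "(norm (\<Sum>e\<in>Basis. f e *\<^sub>R e))\<^sup>2 = (\<Sum>e\<in>Basis. (f e)\<^sup>2)"
proof -
  have "(norm (\<Sum>e\<in>Basis. f e *\<^sub>R e))\<^sup>2 = (\<Sum>e\<in>Basis. f e * ((\<Sum>e\<in>Basis. f e *\<^sub>R e) \<bullet> e))"
    unfolding power2_norm_eq_inner by (rule inner_sum_Basis_scaleR)
  also have "\<dots> = (\<Sum>e\<in>Basis. (f e)\<^sup>2)"
    by (rule sum.cong) (simp_all add: power2_eq_square)
  finally show ?thesis .
qed

lemma has_real_derivative_norm_sq_line:
  "((\<lambda>t. (norm (y + t *\<^sub>R e))\<^sup>2) has_real_derivative 2 * (y \<bullet> e)) (at 0)"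
  unfolding norm_add_scaleR_sq by (auto intro!: derivative_eq_intros)

lemma has_real_derivative_inner_line:
  "((\<lambda>t. (y + t *\<^sub>R e) \<bullet> e) has_real_derivative e \<bullet> e) (at 0)"
proof -
  have "((\<lambda>t. y \<bullet> e + t * (e \<bullet> e)) has_real_derivative e \<bullet> e) (at 0)"
    using DERIV_add[OF DERIV_const DERIV_cmult_Id[of "e \<bullet> e"]] by (simp add: mult.commute)
  then show ?thesis by (simp add: inner_add_left)
qed

lemma integrable_compact_support:
  fixes F :: "'a::euclidean_space \<Rightarrow> real"
  assumes "compact S" "continuous_on S F" "\<And>y. y \<notin> S \<Longrightarrow> F y = 0"
  shows "integrable lborel F"
proof -
  have "F = (\<lambda>x. indicator S x *\<^sub>R F x)"
    using assms(3) by (auto simp: fun_eq_iff indicator_def)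
  with borel_integrable_compact[OF assms(1,2)] show ?thesis by simp
qed

lemma integrable_dominated_compact_support:
  fixes g h :: "'a::euclidean_space \<Rightarrow> real"
  assumes "compact S" "g \<in> borel_measurable borel" "continuous_on S h"
    and "\<And>x. \<bar>g x\<bar> \<le> indicator S x * h x"
  shows "integrable lborel g"
proof (rule Bochner_Integration.integrable_bound)
  show "integrable lborel (\<lambda>x. indicator S x * h x)"
    using borel_integrable_compact[OF assms(1,3)] by simp
  show "g \<in> borel_measurable lborel" using assms(2) by simp
  show "AE x in lborel. norm (g x) \<le> norm (indicator S x * h x)"
    using assms(4) by (auto intro: order_trans[OF _ abs_ge_self])
qed

lemma bounded_compact_support:
  fixes F :: "'a::euclidean_space \<Rightarrow> real"
  assumes "compact S" "continuous_on S F" "\<And>y. y \<notin> S \<Longrightarrow> F y = 0"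
  obtains M where "\<And>y. \<bar>F y\<bar> \<le> M"
proof -
  have "bounded (F ` S)" using assms(1,2) by (intro compact_imp_bounded compact_continuous_image)
  then obtain M where "0 < M" "\<And>y. y \<in> S \<Longrightarrow> \<bar>F y\<bar> \<le> M" unfolding bounded_pos by auto
  with assms(3) have "\<bar>F y\<bar> \<le> M" for y by (cases "y \<in> S") auto
  with that show ?thesis by blast
qed

lemma lborel_integral_translate:
  fixes H :: "'a::euclidean_space \<Rightarrow> real"
  assumes "integrable lborel H"
  shows "integrable lborel (\<lambda>x. H (x + c))" "integral\<^sup>L lborel (\<lambda>x. H (x + c)) = integral\<^sup>L lborel H"
proof -
  have m: "(+) c \<in> measurable lborel borel" by measurable
  have Hm: "H \<in> borel_measurable borel" using borel_measurable_integrable[OF assms] by simp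
  from assms have "integrable (distr lborel borel ((+) c)) H" by (simp add: lborel_distr_plus)
  then show "integrable lborel (\<lambda>x. H (x + c))"
    using integrable_distr_eq[OF m Hm] by (simp add: add.commute)
  show "integral\<^sup>L lborel (\<lambda>x. H (x + c)) = integral\<^sup>L lborel H"
    using integral_distr[OF m Hm] by (simp add: lborel_distr_plus add.commute)
qed

lemma difference_quotient_mean_value:
  fixes H D :: "'a::real_normed_vector \<Rightarrow> real"
  assumes der: "\<And>y. ((\<lambda>t. H (y + t *\<^sub>R e)) has_real_derivative D y) (at 0)" and "0 < t"
  obtains z where "0 < z" "z < t" "(H (x + t *\<^sub>R e) - H x) / t = D (x + z *\<^sub>R e)"
proof -
  have deriv: "((\<lambda>\<tau>. H (x + \<tau> *\<^sub>R e)) has_real_derivative D (x + z *\<^sub>R e)) (at z)" for z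
  proof -
    have "((\<lambda>\<tau>. H ((x + z *\<^sub>R e) + \<tau> *\<^sub>R e)) has_real_derivative D (x + z *\<^sub>R e)) (at 0)"
      by (rule der)
    then have "((\<lambda>\<tau>. H (x + (\<tau> + z) *\<^sub>R e)) has_real_derivative D (x + z *\<^sub>R e)) (at 0)"
      by (simp add: scaleR_add_left add_ac)
    then show ?thesis using DERIV_shift[of _ _ 0 z] by simp
  qed
  obtain z where "0 < z" "z < t"
    "H (x + t *\<^sub>R e) - H (x + 0 *\<^sub>R e) = (t - 0) * D (x + z *\<^sub>R e)"
    using MVT2[OF \<open>0 < t\<close>, of "\<lambda>\<tau>. H (x + \<tau> *\<^sub>R e)" "\<lambda>z. D (x + z *\<^sub>R e)"] deriv
    by blast
  with \<open>0 < t\<close> show ?thesis by (intro that) auto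
qed

lemma abs_difference_quotient_le:
  fixes H D :: "'a::real_normed_vector \<Rightarrow> real"
  assumes der: "\<And>y. ((\<lambda>t. H (y + t *\<^sub>R e)) has_real_derivative D y) (at 0)"
    and bound: "\<And>y. \<bar>D y\<bar> \<le> M" and H0: "\<And>y. y \<notin> S \<Longrightarrow> H y = 0"
    and t: "0 < t" "t \<le> 1"
  shows "\<bar>(H (x + t *\<^sub>R e) - H x) / t\<bar> \<le> M * indicator ((\<lambda>z. fst z - snd z *\<^sub>R e) ` (S \<times> {0..1})) x"
proof (cases "x \<in> (\<lambda>z. fst z - snd z *\<^sub>R e) ` (S \<times> {0..1})")
  case True
  obtain z where "(H (x + t *\<^sub>R e) - H x) / t = D (x + z *\<^sub>R e)"
    using difference_quotient_mean_value[OF der t(1)] by blast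
  with True bound show ?thesis by simp
next
  case False
  have "x \<notin> S" "x + t *\<^sub>R e \<notin> S"
    using False t rev_image_eqI[of "(x, 0)" "S \<times> {0..1}" x "\<lambda>z. fst z - snd z *\<^sub>R e"]
      rev_image_eqI[of "(x + t *\<^sub>R e, t)" "S \<times> {0..1}" x "\<lambda>z. fst z - snd z *\<^sub>R e"]
    by auto
  with False show ?thesis by (simp add: H0)
qed

definition eps_seq :: "nat \<Rightarrow> real" where
  "eps_seq n = inverse (real (Suc n))"

lemma eps_seq_pos: "0 < eps_seq n"
  and eps_seq_le_1: "eps_seq n \<le> 1"
  by (simp_all add: eps_seq_def field_simps)

lemma eps_seq_tendsto: "eps_seq \<longlonglongrightarrow> 0"
  unfolding eps_seq_def by (rule LIMSEQ_inverse_real_of_nat)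

text \<open>Difference quotients integrate to zero by translation invariance of Lebesgue measure, and they
  converge dominatedly to the derivative.\<close>

lemma integral_line_derivative_eq_0:
  fixes H D :: "'a::euclidean_space \<Rightarrow> real"
  assumes S: "compact S"
    and H: "continuous_on S H" "\<And>y. y \<notin> S \<Longrightarrow> H y = 0"
    and D: "continuous_on S D" "\<And>y. y \<notin> S \<Longrightarrow> D y = 0"
    and der: "\<And>y. ((\<lambda>t. H (y + t *\<^sub>R e)) has_real_derivative D y) (at 0)"
  shows "integrable lborel D" "integral\<^sup>L lborel D = 0"
proof -
  show D_int: "integrable lborel D" by (rule integrable_compact_support[OF S D])
  have H_int: "integrable lborel H" by (rule integrable_compact_support[OF S H])
  obtain M where M: "\<And>y. \<bar>D y\<bar> \<le> M" using bounded_compact_support[OF S D] by blast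
  define q where "q n x = (H (x + eps_seq n *\<^sub>R e) - H x) / eps_seq n" for n x
  define S' where "S' = (\<lambda>z. fst z - snd z *\<^sub>R e) ` (S \<times> {0..1::real})"
  have "compact S'" unfolding S'_def
    by (intro compact_continuous_image compact_Times S compact_Icc continuous_intros)
  then have majorant: "integrable lborel (\<lambda>x. M * indicator S' x)"
    using emeasure_compact_finite[of S']
    by (intro integrable_mult_right) (simp add: integrable_indicator_iff borel_compact less_top)
  have q_int: "integrable lborel (q n)" for n
    unfolding q_def
    by (intro integrable_divide_zero Bochner_Integration.integrable_diff lborel_integral_translate(1) H_int)
  have q_integral: "integral\<^sup>L lborel (q n) = 0" for n
  proof -
    have "integral\<^sup>L lborel (q n) = (\<integral>x. H (x + eps_seq n *\<^sub>R e) - H x \<partial>lborel) / eps_seq n"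
      unfolding q_def by (rule integral_divide_zero)
    also have "(\<integral>x. H (x + eps_seq n *\<^sub>R e) - H x \<partial>lborel) = 0"
      using lborel_integral_translate[OF H_int] H_int by (simp add: Bochner_Integration.integral_diff)
    finally show ?thesis by simp
  qed
  have "filterlim eps_seq (at 0) sequentially"
    using eps_seq_tendsto eps_seq_pos by (simp add: filterlim_at less_imp_neq[symmetric])
  moreover have "((\<lambda>h. (H (x + h *\<^sub>R e) - H x) / h) \<longlongrightarrow> D x) (at 0)" for x
    using der[of x] by (simp add: DERIV_def)
  ultimately have q_lim: "(\<lambda>n. q n x) \<longlonglongrightarrow> D x" for x
    unfolding q_def by (rule filterlim_compose[rotated])
  have "(\<lambda>n. integral\<^sup>L lborel (q n)) \<longlonglongrightarrow> integral\<^sup>L lborel D"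
  proof (rule integral_dominated_convergence[OF _ _ majorant])
    show "\<And>n. AE x in lborel. norm (q n x) \<le> M * indicator S' x"
      unfolding q_def S'_def using abs_difference_quotient_le[OF der M H(2) eps_seq_pos eps_seq_le_1] by simp
  qed (use borel_measurable_integrable[OF D_int] borel_measurable_integrable[OF q_int] q_lim in auto)
  then show "integral\<^sup>L lborel D = 0" by (simp add: q_integral LIMSEQ_const_iff)
qed

lemma integrable_of_nonneg_tendsto:
  fixes f :: "nat \<Rightarrow> 'a \<Rightarrow> real"
  assumes f_int: "\<And>n. integrable M (f n)" and f_nonneg: "\<And>n x. 0 \<le> f n x"
    and lim: "\<And>x. (\<lambda>n. f n x) \<longlonglongrightarrow> g x" and "g \<in> borel_measurable M"
    and "(\<lambda>n. integral\<^sup>L M (f n)) \<longlonglongrightarrow> L"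
  shows "integrable M g"
proof (rule integrableI_nonneg)
  have "(\<integral>\<^sup>+x. ennreal (g x) \<partial>M) = (\<integral>\<^sup>+x. liminf (\<lambda>n. ennreal (f n x)) \<partial>M)"
    using lim by (intro nn_integral_cong lim_imp_Liminf[symmetric] tendsto_ennrealI) simp_all
  also have "\<dots> \<le> liminf (\<lambda>n. \<integral>\<^sup>+x. ennreal (f n x) \<partial>M)"
    using borel_measurable_integrable[OF f_int] by (intro nn_integral_liminf) simp
  also have "\<dots> = liminf (\<lambda>n. ennreal (integral\<^sup>L M (f n)))"
    using f_int f_nonneg by (simp add: nn_integral_eq_integral)
  also have "\<dots> = ennreal L"
    using assms(5) by (intro lim_imp_Liminf tendsto_ennrealI) simp_all
  finally show "(\<integral>\<^sup>+x. ennreal (g x) \<partial>M) < \<infinity>" by (simp add: le_less_trans)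
  show "AE x in M. 0 \<le> g x"
    by (intro AE_I2 LIMSEQ_le_const[OF lim]) (use f_nonneg in auto)
qed (rule assms(4))

section \<open>Regularised powers\<close>

text \<open>For \<open>s = |u|\<^sup>2\<close> and \<open>\<epsilon> \<rightarrow> 0\<close>, \<open>reg_chi p \<epsilon> s \<rightarrow> s\<^bsup>(p-2)/2\<^esup> = |u|\<^bsup>p-2\<^esup>\<close> and
  \<open>reg_psi p \<epsilon> s \<rightarrow> s\<^bsup>p/2\<^esup> = |u|\<^sup>p\<close>, while for \<open>\<epsilon> > 0\<close> both are smooth in \<open>s \<ge> 0\<close>;
  the primed versions are their derivatives in \<open>s\<close>.\<close>

definition reg_chi :: "real \<Rightarrow> real \<Rightarrow> real \<Rightarrow> real" where
  "reg_chi p \<epsilon> s = s * (s + \<epsilon>) powr ((p - 4) / 2)"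

definition reg_chi' :: "real \<Rightarrow> real \<Rightarrow> real \<Rightarrow> real" where
  "reg_chi' p \<epsilon> s = (s + \<epsilon>) powr ((p - 4) / 2) + s * ((p - 4) / 2 * (s + \<epsilon>) powr ((p - 4) / 2 - 1))"

definition reg_psi :: "real \<Rightarrow> real \<Rightarrow> real \<Rightarrow> real" where
  "reg_psi p \<epsilon> s = (s + \<epsilon>) powr (p / 2) - \<epsilon> powr (p / 2)"

definition reg_psi' :: "real \<Rightarrow> real \<Rightarrow> real \<Rightarrow> real" where
  "reg_psi' p \<epsilon> s = p / 2 * (s + \<epsilon>) powr (p / 2 - 1)"

lemma reg_chi_0 [simp]: "reg_chi p \<epsilon> 0 = 0"
  and reg_psi_0 [simp]: "reg_psi p \<epsilon> 0 = 0"
  by (simp_all add: reg_chi_def reg_psi_def)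

lemma has_real_derivative_reg_chi:
  assumes "(f has_real_derivative f') (at x)" "0 \<le> f x" "0 < \<epsilon>"
  shows "((\<lambda>t. reg_chi p \<epsilon> (f t)) has_real_derivative reg_chi' p \<epsilon> (f x) * f') (at x)"
proof -
  have "((\<lambda>t. f t + \<epsilon>) has_real_derivative f') (at x)"
    using assms(1) by (auto intro!: derivative_eq_intros)
  moreover have "0 < f x + \<epsilon>" using assms(2,3) by simp
  ultimately have "((\<lambda>t. f t * (f t + \<epsilon>) powr ((p - 4) / 2)) has_real_derivative
      f x * ((p - 4) / 2 * (f x + \<epsilon>) powr ((p - 4) / 2 - of_nat 1) * f') + f' * (f x + \<epsilon>) powr ((p - 4) / 2))
      (at x)"
    by (intro DERIV_mult' assms(1) DERIV_fun_powr)
  then show ?thesis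
    unfolding reg_chi_def by (rule DERIV_cong) (simp add: reg_chi'_def algebra_simps)
qed

lemma has_real_derivative_reg_psi:
  assumes "(f has_real_derivative f') (at x)" "0 \<le> f x" "0 < \<epsilon>"
  shows "((\<lambda>t. reg_psi p \<epsilon> (f t)) has_real_derivative reg_psi' p \<epsilon> (f x) * f') (at x)"
proof -
  have "((\<lambda>t. f t + \<epsilon>) has_real_derivative f') (at x)"
    using assms(1) by (auto intro!: derivative_eq_intros)
  moreover have "0 < f x + \<epsilon>" using assms(2,3) by simp
  ultimately have "((\<lambda>t. (f t + \<epsilon>) powr (p / 2) - \<epsilon> powr (p / 2)) has_real_derivative
      p / 2 * (f x + \<epsilon>) powr (p / 2 - of_nat 1) * f' - 0) (at x)"
    by (intro DERIV_diff DERIV_fun_powr DERIV_const)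
  then show ?thesis
    unfolding reg_psi_def by (rule DERIV_cong) (simp add: reg_psi'_def)
qed

lemma tendsto_reg_chi:
  assumes "\<epsilon> \<longlonglongrightarrow> 0" "0 < s"
  shows "(\<lambda>n. reg_chi p (\<epsilon> n) s) \<longlonglongrightarrow> s powr ((p - 2) / 2)"
proof -
  have "(\<lambda>n. s * (s + \<epsilon> n) powr ((p - 4) / 2)) \<longlonglongrightarrow> s * (s + 0) powr ((p - 4) / 2)"
    using assms by (intro tendsto_intros) auto
  moreover have "s * s powr ((p - 4) / 2) = s powr ((p - 2) / 2)"
    using assms(2) by (intro mult_powr_eq) (simp_all add: field_simps)
  ultimately show ?thesis unfolding reg_chi_def by simp
qed

lemma tendsto_reg_chi':
  assumes "\<epsilon> \<longlonglongrightarrow> 0" "0 < s"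
  shows "(\<lambda>n. reg_chi' p (\<epsilon> n) s) \<longlonglongrightarrow> (p - 2) / 2 * s powr ((p - 4) / 2)"
proof -
  have lim: "(\<lambda>n. reg_chi' p (\<epsilon> n) s) \<longlonglongrightarrow>
      (s + 0) powr ((p - 4) / 2) + s * ((p - 4) / 2 * (s + 0) powr ((p - 4) / 2 - 1))"
    unfolding reg_chi'_def using assms by (intro tendsto_intros) auto
  have "s * s powr ((p - 4) / 2 - 1) = s powr ((p - 4) / 2)"
    using assms(2) by (intro mult_powr_eq) simp_all
  then have "(s + 0) powr ((p - 4) / 2) + s * ((p - 4) / 2 * (s + 0) powr ((p - 4) / 2 - 1))
      = (p - 2) / 2 * s powr ((p - 4) / 2)"
    by (simp add: mult.left_commute[of s] field_simps)
  with lim show ?thesis by (simp only:)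
qed

lemma tendsto_reg_psi:
  assumes "\<epsilon> \<longlonglongrightarrow> 0" "\<And>n. 0 \<le> \<epsilon> n" "0 < s" "0 < p"
  shows "(\<lambda>n. reg_psi p (\<epsilon> n) s) \<longlonglongrightarrow> s powr (p / 2)"
proof -
  have "(\<lambda>n. s + \<epsilon> n) \<longlonglongrightarrow> s + 0"
    by (intro tendsto_add tendsto_const assms(1))
  then have "(\<lambda>n. (s + \<epsilon> n) powr (p / 2)) \<longlonglongrightarrow> (s + 0) powr (p / 2)"
    by (rule tendsto_powr[OF _ tendsto_const]) (use assms(3) in simp)
  moreover have "(\<lambda>n. \<epsilon> n powr (p / 2)) \<longlonglongrightarrow> 0"
    by (rule tendsto_zero_powrI[OF assms(1) tendsto_const]) (use assms in auto)
  ultimately have "(\<lambda>n. (s + \<epsilon> n) powr (p / 2) - \<epsilon> n powr (p / 2)) \<longlonglongrightarrow> (s + 0) powr (p / 2) - 0"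
    by (rule tendsto_diff)
  then show ?thesis unfolding reg_psi_def by simp
qed

lemma tendsto_reg_psi':
  assumes "\<epsilon> \<longlonglongrightarrow> 0" "0 < s"
  shows "(\<lambda>n. reg_psi' p (\<epsilon> n) s) \<longlonglongrightarrow> p / 2 * s powr (p / 2 - 1)"
proof -
  have "(\<lambda>n. p / 2 * (s + \<epsilon> n) powr (p / 2 - 1)) \<longlonglongrightarrow> p / 2 * (s + 0) powr (p / 2 - 1)"
    using assms by (intro tendsto_intros) auto
  then show ?thesis unfolding reg_psi'_def by simp
qed

text \<open>The form \<open>2 reg_chi' N2 + reg_chi G\<close> is the gradient part of the divergence of the first
  regularised field, for \<open>G = |\<nabla>u|\<^sup>2\<close> and \<open>N2 = \<Sum>\<^sub>e R\<^sub>e\<^sup>2 \<le> s G\<close>.\<close>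

lemma reg_grad_form_nonneg:
  assumes "1 < p" "0 < \<epsilon>" "0 \<le> s" "0 \<le> G" "0 \<le> N2" "N2 \<le> s * G"
  shows "0 \<le> 2 * reg_chi' p \<epsilon> s * N2 + reg_chi p \<epsilon> s * G"
proof -
  define X where "X = s + \<epsilon>"
  define a where "a = (p - 4) / 2"
  have X: "0 < X" unfolding X_def using assms by simp
  have Xa: "X powr a = X * X powr (a - 1)"
    using X by (intro mult_powr_eq[symmetric]) simp_all
  have form_eq: "2 * reg_chi' p \<epsilon> s * N2 + reg_chi p \<epsilon> s * G
      = X powr (a - 1) * (2 * (X + a * s) * N2 + s * X * G)"
    unfolding reg_chi_def reg_chi'_def X_def[symmetric] a_def[symmetric] Xa
    by (simp add: algebra_simps)
  have "0 \<le> 2 * (X + a * s) * N2 + s * X * G"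
  proof (cases "0 \<le> X + a * s")
    case True
    with assms X show ?thesis by simp
  next
    case False
    then have "2 * (X + a * s) * (s * G) \<le> 2 * (X + a * s) * N2"
      using assms(6) by (intro mult_left_mono_neg) auto
    moreover have "2 * (X + a * s) * (s * G) + s * X * G = s * G * ((p - 1) * s + 3 * \<epsilon>)"
      unfolding X_def a_def by (simp add: field_simps)
    moreover have "0 \<le> s * G * ((p - 1) * s + 3 * \<epsilon>)"
      using assms by simp
    ultimately show ?thesis by linarith
  qed
  with form_eq show ?thesis by simp
qed

lemma mult_powr_le_powr_add:
  fixes s X :: real
  assumes "0 \<le> s" "s \<le> X" "X \<le> s + 1"
  shows "s * X powr a \<le> s powr (a + 1) + s * (s + 1) powr a"
proof (cases "s = 0")
  case False
  with assms(1) have "0 < s" by simp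
  show ?thesis
  proof (cases "a \<le> 0")
    case True
    then have "s * X powr a \<le> s * s powr a"
      using \<open>0 < s\<close> assms(2) by (simp add: powr_mono2')
    also have "\<dots> = s powr (a + 1)"
      using assms(1) by (rule mult_powr_eq) simp
    finally have "s * X powr a \<le> s powr (a + 1)" .
    moreover have "0 \<le> s * (s + 1) powr a" using assms(1) by simp
    ultimately show ?thesis by linarith
  next
    case False
    then have "s * X powr a \<le> s * (s + 1) powr a"
      using \<open>0 < s\<close> assms by (simp add: powr_mono2)
    moreover have "0 \<le> s powr (a + 1)" by simp
    ultimately show ?thesis by linarith
  qed
qed simp

lemma reg_grad_form_le:
  assumes "0 < \<epsilon>" "\<epsilon> \<le> 1" "0 \<le> s" "0 \<le> G" "0 \<le> N2" "N2 \<le> s * G"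
  shows "2 * reg_chi' p \<epsilon> s * N2 + reg_chi p \<epsilon> s * G
    \<le> (3 + \<bar>p - 4\<bar>) * G * (s powr ((p - 2) / 2) + s * (s + 1) powr ((p - 4) / 2))"
proof -
  define X where "X = s + \<epsilon>"
  define a where "a = (p - 4) / 2"
  have X: "0 < X" "s \<le> X" "X \<le> s + 1" unfolding X_def using assms by auto
  have "s * X powr (a - 1) \<le> X * X powr (a - 1)"
    using X by (intro mult_right_mono) auto
  also have "\<dots> = X powr a"
    using X by (intro mult_powr_eq) simp_all
  finally have "\<bar>a\<bar> * (s * X powr (a - 1)) \<le> \<bar>a\<bar> * X powr a"
    by (rule mult_left_mono) simp
  then have "\<bar>s * (a * X powr (a - 1))\<bar> \<le> \<bar>a\<bar> * X powr a"
    using assms(3) by (simp add: abs_mult mult_ac)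
  then have "reg_chi' p \<epsilon> s \<le> (1 + \<bar>a\<bar>) * X powr a"
    unfolding reg_chi'_def X_def[symmetric] a_def[symmetric] by (simp add: algebra_simps)
  then have "2 * reg_chi' p \<epsilon> s \<le> 2 * ((1 + \<bar>a\<bar>) * X powr a)" by simp
  then have "2 * reg_chi' p \<epsilon> s * N2 \<le> 2 * ((1 + \<bar>a\<bar>) * X powr a) * (s * G)"
    by (rule mult_mono[OF _ assms(6)]) (use assms(5) in simp_all)
  then have "2 * reg_chi' p \<epsilon> s * N2 + reg_chi p \<epsilon> s * G \<le> (3 + \<bar>p - 4\<bar>) * G * (s * X powr a)"
    unfolding reg_chi_def X_def[symmetric] by (simp add: a_def algebra_simps)
  also have "s * X powr a \<le> s powr ((p - 2) / 2) + s * (s + 1) powr ((p - 4) / 2)"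
    unfolding a_def using mult_powr_le_powr_add[OF assms(3) X(2,3), of "(p - 4) / 2"]
    by (simp add: field_simps)
  finally show ?thesis using assms(4) by (simp add: mult_left_mono)
qed

lemma powr_mult_sqrt:
  assumes "0 \<le> s"
  shows "s powr a * sqrt s = s powr (a + 1 / 2)"
  using assms by (simp add: powr_add powr_half_sqrt)

lemma abs_reg_chi_mult_sqrt_le:
  assumes "1 \<le> p" "0 < \<epsilon>" "\<epsilon> \<le> 1" "0 \<le> s"
  shows "\<bar>reg_chi p \<epsilon> s\<bar> * sqrt s \<le> (s + 1) powr ((p - 1) / 2)"
proof -
  define X where "X = s + \<epsilon>"
  have X: "0 < X" "s \<le> X" "X \<le> s + 1" unfolding X_def using assms by auto
  have "\<bar>reg_chi p \<epsilon> s\<bar> * sqrt s \<le> X * X powr ((p - 4) / 2) * sqrt X"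
    using assms X by (simp add: reg_chi_def X_def[symmetric] abs_mult mult_mono)
  also have "X * X powr ((p - 4) / 2) = X powr ((p - 2) / 2)"
    using X(1) by (intro mult_powr_eq) (simp_all add: field_simps)
  also have "X powr ((p - 2) / 2) * sqrt X = X powr ((p - 1) / 2)"
    using powr_mult_sqrt[of X] X(1) by (simp add: add_divide_distrib[symmetric])
  also have "\<dots> \<le> (s + 1) powr ((p - 1) / 2)"
    using X assms(1) by (intro powr_mono2) auto
  finally show ?thesis .
qed

lemma abs_reg_psi_le:
  assumes "0 \<le> p" "0 < \<epsilon>" "\<epsilon> \<le> 1" "0 \<le> s"
  shows "\<bar>reg_psi p \<epsilon> s\<bar> \<le> (s + 1) powr (p / 2)"
proof -
  have "\<epsilon> powr (p / 2) \<le> (s + \<epsilon>) powr (p / 2)" "(s + \<epsilon>) powr (p / 2) \<le> (s + 1) powr (p / 2)"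
    using assms by (intro powr_mono2; simp)+
  then show ?thesis unfolding reg_psi_def by (smt (verit) powr_ge_zero)
qed

lemma abs_reg_psi'_mult_sqrt_le:
  assumes "1 \<le> p" "0 < \<epsilon>" "\<epsilon> \<le> 1" "0 \<le> s"
  shows "\<bar>reg_psi' p \<epsilon> s\<bar> * sqrt s \<le> p / 2 * (s + 1) powr ((p - 1) / 2)"
proof -
  define X where "X = s + \<epsilon>"
  have X: "0 < X" "s \<le> X" "X \<le> s + 1" unfolding X_def using assms by auto
  have "\<bar>reg_psi' p \<epsilon> s\<bar> * sqrt s \<le> p / 2 * (X powr (p / 2 - 1) * sqrt X)"
    using assms X by (simp add: reg_psi'_def X_def[symmetric] abs_mult mult_left_mono)
  also have "\<dots> = p / 2 * X powr ((p - 1) / 2)"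
    using powr_mult_sqrt[of X] X(1) by (simp add: diff_divide_distrib)
  also have "\<dots> \<le> p / 2 * (s + 1) powr ((p - 1) / 2)"
    using X assms(1) by (intro mult_left_mono powr_mono2) auto
  finally show ?thesis .
qed

lemma powr_mult_sqrt_le:
  assumes "1 \<le> p" "0 \<le> s"
  shows "s powr ((p - 2) / 2) * sqrt s \<le> (s + 1) powr ((p - 1) / 2)"
proof -
  have "s powr ((p - 2) / 2) * sqrt s = s powr ((p - 1) / 2)"
    using powr_mult_sqrt[OF assms(2)] by (simp add: diff_divide_distrib)
  also have "\<dots> \<le> (s + 1) powr ((p - 1) / 2)"
    using assms by (intro powr_mono2) auto
  finally show ?thesis .
qed

section \<open>The function \<open>C\<^sub>p\<close>\<close>

lemma Cp_add_scaleR: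
  fixes L U :: complex
  assumes "0 \<le> k"
  shows "Cp p L (L + k *\<^sub>R U) = cmod L powr p - (k * cmod U) powr p
    + p * (k * cmod U) powr (p - 2) * k * (Re (cnj U * L) + k * (cmod U)\<^sup>2)"
proof -
  have d: "L - (L + k *\<^sub>R U) = - (k *\<^sub>R U)" by simp
  have n: "cmod (- (k *\<^sub>R U)) = k * cmod U" using assms by simp
  have r: "Re (- (k *\<^sub>R U) * cnj (L + k *\<^sub>R U)) = - k * (Re (cnj U * L) + k * (cmod U)\<^sup>2)"
    unfolding cmod_power2 by (simp add: scaleR_conv_of_real algebra_simps power2_eq_square)
  show ?thesis unfolding Cp_def d n r by (simp add: algebra_simps)
qed

lemma powr_minus_two_mult_power2: "0 \<le> (x::real) \<Longrightarrow> x powr (a - 2) * x\<^sup>2 = x powr a"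
proof -
  assume "0 \<le> x"
  then have "x powr (a - 2) * x\<^sup>2 = x powr (a - 2) * x powr 2" by simp
  also have "\<dots> = x powr a" by (simp add: powr_add[symmetric])
  finally show ?thesis .
qed

lemma Cp_add_inverse_square_scaleR:
  fixes L U :: complex
  assumes "0 \<le> C" "0 \<le> r"
  shows "Cp p L (L + (C / r\<^sup>2) *\<^sub>R U) = cmod L powr p + (p - 1) * C powr p * (cmod U powr p / r powr (2 * p))
    + p * C powr (p - 1) * (cmod U powr (p - 2) / r powr (2 * (p - 1)) * Re (cnj U * L))"
proof (cases "r = 0")
  case False
  with assms have r: "0 < r\<^sup>2" by simp
  define v where "v = cmod U"
  define k where "k = C / r\<^sup>2"
  have "0 \<le> k" "0 \<le> v" using assms by (simp_all add: k_def v_def)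
  have X: "(k * v) powr p = C powr p * (v powr p / r powr (2 * p))"
    using assms \<open>0 \<le> v\<close> by (simp add: k_def powr_mult powr_divide sq_powr)
  have C: "C powr (p - 2) * C = C powr (p - 1)"
    using mult_powr_eq[OF assms(1), of "p - 2" "p - 1"] by (simp add: mult.commute)
  have R: "(r\<^sup>2) powr (p - 2) * r\<^sup>2 = r powr (2 * (p - 1))"
    using mult_powr_eq[of "r\<^sup>2" "p - 2" "p - 1"] sq_powr[OF assms(2), of "p - 1"] by (simp add: mult.commute)
  have "(k * v) powr (p - 2) * k = (C powr (p - 2) * C) * v powr (p - 2) / ((r\<^sup>2) powr (p - 2) * r\<^sup>2)"
    using assms \<open>0 \<le> v\<close> r by (simp add: k_def powr_mult powr_divide)
  also have "\<dots> = C powr (p - 1) * (v powr (p - 2) / r powr (2 * (p - 1)))"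
    unfolding C R by simp
  finally have Y: "(k * v) powr (p - 2) * k = C powr (p - 1) * (v powr (p - 2) / r powr (2 * (p - 1)))" .
  have Z: "(k * v) powr (p - 2) * k * (k * v\<^sup>2) = (k * v) powr p"
    using powr_minus_two_mult_power2[of "k * v" p] \<open>0 \<le> k\<close> \<open>0 \<le> v\<close>
    by (simp add: power2_eq_square mult_ac)
  have "Cp p L (L + (C / r\<^sup>2) *\<^sub>R U) = cmod L powr p - (k * v) powr p
      + p * ((k * v) powr (p - 2) * k) * Re (cnj U * L) + p * ((k * v) powr (p - 2) * k * (k * v\<^sup>2))"
    unfolding k_def[symmetric] using Cp_add_scaleR[OF \<open>0 \<le> k\<close>, of p L U]
    by (simp add: v_def distrib_left mult.assoc)
  also have "\<dots> = cmod L powr p + (p - 1) * (k * v) powr p + p * ((k * v) powr (p - 2) * k) * Re (cnj U * L)"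
    unfolding Z by (simp add: algebra_simps)
  also have "\<dots> = cmod L powr p + (p - 1) * C powr p * (cmod U powr p / r powr (2 * p))
      + p * C powr (p - 1) * (cmod U powr (p - 2) / r powr (2 * (p - 1)) * Re (cnj U * L))"
    unfolding X Y unfolding v_def by (simp only: mult.assoc)
  finally show ?thesis .
qed (simp add: Cp_def)

section \<open>Divergence identities\<close>

locale rellich_setting =
  fixes u :: "'a::euclidean_space \<Rightarrow> complex" and p :: real
  assumes test_fun: "C0inf_punctured u" and p_gt_1: "1 < p"
begin

definition supp_u :: "'a set" where
  "supp_u = closure {x. u x \<noteq> 0}"

lemma smooth_u: "smooth_fun u"
  using test_fun by (simp add: C0inf_punctured_def)

lemma compact_supp_u: "compact supp_u"
  using test_fun by (simp add: C0inf_punctured_def supp_u_def)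

lemma zero_notin_supp_u: "0 \<notin> supp_u"
  using test_fun by (simp add: C0inf_punctured_def supp_u_def)

lemma norm_pos_on_supp_u: "y \<in> supp_u \<Longrightarrow> 0 < norm y"
  using zero_notin_supp_u by (cases "y = 0") auto

lemma in_supp_u: "u y \<noteq> 0 \<Longrightarrow> y \<in> supp_u"
  unfolding supp_u_def by (rule closure_subset[THEN subsetD]) simp

lemma u_eq_0_outside: "y \<notin> supp_u \<Longrightarrow> u y = 0"
  using in_supp_u by metis

lemma open_outside_supp_u: "open (- supp_u)"
  by (rule open_Compl[OF compact_imp_closed[OF compact_supp_u]])

lemma partial_u_eq_0_outside: "y \<notin> supp_u \<Longrightarrow> partial e u y = 0"
  by (rule partial_eq_0_if_vanishing[OF open_outside_supp_u]) (auto intro: u_eq_0_outside)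

lemma partial2_u_eq_0_outside: "y \<notin> supp_u \<Longrightarrow> partial e (partial e u) y = 0"
  by (rule partial_eq_0_if_vanishing[OF open_outside_supp_u]) (auto intro: partial_u_eq_0_outside)

lemma laplacian_eq_0_outside: "y \<notin> supp_u \<Longrightarrow> laplacian u y = 0"
  by (simp add: laplacian_def partial2_u_eq_0_outside)

lemma continuous_on_u: "continuous_on A u"
  by (rule smooth_fun_continuous_on[OF smooth_u])

lemma continuous_on_partial_u: "e \<in> Basis \<Longrightarrow> continuous_on A (partial e u)"
  by (rule smooth_fun_continuous_on[OF smooth_fun_partial[OF smooth_u]])

lemma continuous_on_partial2_u: "e \<in> Basis \<Longrightarrow> continuous_on A (partial e (partial e u))"
  by (rule smooth_fun_continuous_on[OF smooth_fun_partial[OF smooth_fun_partial[OF smooth_u]]])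

lemma continuous_on_laplacian: "continuous_on A (laplacian u)"
  unfolding laplacian_def by (intro continuous_on_sum continuous_on_partial2_u)

text \<open>\<open>re_du e = Re(cnj u \<cdot> \<partial>\<^sub>e u) = \<partial>\<^sub>e|u|\<^sup>2 / 2\<close>, which is \<open>|u| \<partial>\<^sub>e|u|\<close> away from the
  zeros of \<open>u\<close>, and \<open>re_xdu = Re(cnj u \<cdot> x\<cdot>\<nabla>u)\<close>.\<close>

definition modsq :: "'a \<Rightarrow> real" where
  "modsq y = Re (cnj (u y) * u y)"

definition re_du :: "'a \<Rightarrow> 'a \<Rightarrow> real" where
  "re_du e y = Re (cnj (u y) * partial e u y)"

definition re_du_sq :: "'a \<Rightarrow> real" where
  "re_du_sq y = (\<Sum>e\<in>Basis. (re_du e y)\<^sup>2)"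

definition re_xdu :: "'a \<Rightarrow> real" where
  "re_xdu y = (\<Sum>e\<in>Basis. (y \<bullet> e) * re_du e y)"

definition re_lap :: "'a \<Rightarrow> real" where
  "re_lap y = Re (cnj (u y) * laplacian u y)"

definition xdu_bound :: "'a \<Rightarrow> real" where
  "xdu_bound y = (\<Sum>e\<in>Basis. \<bar>y \<bullet> e\<bar> * cmod (partial e u y))"

lemma modsq_eq: "modsq y = (cmod (u y))\<^sup>2"
  unfolding modsq_def cmod_power2 by (simp add: power2_eq_square)

lemma modsq_nonneg: "0 \<le> modsq y"
  by (simp add: modsq_eq)

lemma modsq_pos_iff: "0 < modsq y \<longleftrightarrow> u y \<noteq> 0"
  by (simp add: modsq_eq)

lemma sqrt_modsq: "sqrt (modsq y) = cmod (u y)"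
  by (simp add: modsq_eq)

lemma eq_0_where_u_eq_0:
  assumes "u y = 0"
  shows "modsq y = 0" "re_du e y = 0" "re_du_sq y = 0" "re_xdu y = 0" "re_lap y = 0"
  by (simp_all add: assms modsq_def re_du_def re_du_sq_def re_xdu_def re_lap_def)

lemma abs_re_cnj_mult_le: "\<bar>Re (cnj z * w)\<bar> \<le> cmod z * cmod w"
  using abs_Re_le_cmod[of "cnj z * w"] by (simp add: norm_mult)

lemma re_du_sq_le: "re_du_sq y \<le> modsq y * grad_norm_sq u y"
proof -
  have "(re_du e y)\<^sup>2 \<le> modsq y * (cmod (partial e u y))\<^sup>2" for e
  proof -
    have "\<bar>re_du e y\<bar> \<le> cmod (u y) * cmod (partial e u y)"
      unfolding re_du_def by (rule abs_re_cnj_mult_le)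
    from power_mono[OF this abs_ge_zero, of 2] show ?thesis
      by (simp add: modsq_eq power_mult_distrib)
  qed
  then show ?thesis
    unfolding re_du_sq_def grad_norm_sq_def sum_distrib_left by (rule sum_mono)
qed

lemma re_du_sq_nonneg: "0 \<le> re_du_sq y"
  by (simp add: re_du_sq_def sum_nonneg)

lemma xdu_bound_nonneg: "0 \<le> xdu_bound y"
  by (simp add: xdu_bound_def sum_nonneg)

lemma abs_re_xdu_le: "\<bar>re_xdu y\<bar> \<le> cmod (u y) * xdu_bound y"
proof -
  have "\<bar>re_xdu y\<bar> \<le> (\<Sum>e\<in>Basis. \<bar>y \<bullet> e\<bar> * \<bar>re_du e y\<bar>)"
    unfolding re_xdu_def by (rule order_trans[OF sum_abs]) (simp add: abs_mult)
  also have "\<dots> \<le> (\<Sum>e\<in>Basis. \<bar>y \<bullet> e\<bar> * (cmod (u y) * cmod (partial e u y)))"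
    unfolding re_du_def by (intro sum_mono mult_left_mono abs_re_cnj_mult_le) simp
  finally show ?thesis by (simp add: xdu_bound_def sum_distrib_left mult_ac)
qed

lemma abs_re_lap_le: "\<bar>re_lap y\<bar> \<le> cmod (u y) * cmod (laplacian u y)"
  unfolding re_lap_def by (rule abs_re_cnj_mult_le)

lemma re_lap_eq_sum: "re_lap y = (\<Sum>e\<in>Basis. Re (cnj (u y) * partial e (partial e u) y))"
  unfolding re_lap_def laplacian_def sum_distrib_left Re_sum ..

lemma continuous_on_modsq: "continuous_on A modsq"
  unfolding modsq_def by (intro continuous_intros continuous_on_u)

lemma continuous_on_re_du_sq: "continuous_on A re_du_sq"
  unfolding re_du_sq_def re_du_def
  by (intro continuous_on_sum continuous_intros continuous_on_u continuous_on_partial_u)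

lemma continuous_on_re_xdu: "continuous_on A re_xdu"
  unfolding re_xdu_def re_du_def
  by (intro continuous_on_sum continuous_intros continuous_on_u continuous_on_partial_u)

lemma continuous_on_re_lap: "continuous_on A re_lap"
  unfolding re_lap_def by (intro continuous_intros continuous_on_u continuous_on_laplacian)

lemma continuous_on_xdu_bound: "continuous_on A xdu_bound"
  unfolding xdu_bound_def by (intro continuous_on_sum continuous_intros continuous_on_partial_u)

lemma continuous_on_grad_norm_sq: "continuous_on A (grad_norm_sq u)"
  unfolding grad_norm_sq_def by (intro continuous_on_sum continuous_intros continuous_on_partial_u)

lemma measurable_quantities [measurable]:
  "modsq \<in> borel_measurable borel" "re_du_sq \<in> borel_measurable borel"
  "re_xdu \<in> borel_measurable borel" "re_lap \<in> borel_measurable borel"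
  "grad_norm_sq u \<in> borel_measurable borel"
  by (intro borel_measurable_continuous_onI continuous_on_modsq continuous_on_re_du_sq
      continuous_on_re_xdu continuous_on_re_lap continuous_on_grad_norm_sq)+

lemma has_real_derivative_modsq:
  assumes "e \<in> Basis"
  shows "((\<lambda>t. modsq (y + t *\<^sub>R e)) has_real_derivative 2 * re_du e y) (at 0)"
proof -
  note du = smooth_fun_has_vector_derivative[OF smooth_u assms, of y]
  have "((\<lambda>t. Re (cnj (u (y + t *\<^sub>R e)) * u (y + t *\<^sub>R e))) has_real_derivative
      Re (cnj (u (y + 0 *\<^sub>R e)) * partial e u y + cnj (partial e u y) * u (y + 0 *\<^sub>R e))) (at 0)"
    by (intro has_field_derivative_Re has_vector_derivative_mult has_vector_derivative_cnj du)
  then show ?thesis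
    unfolding modsq_def re_du_def by (rule DERIV_cong) (simp add: algebra_simps)
qed

lemma has_real_derivative_re_du:
  assumes "e \<in> Basis"
  shows "((\<lambda>t. re_du e (y + t *\<^sub>R e)) has_real_derivative
    Re (cnj (u y) * partial e (partial e u) y) + (cmod (partial e u y))\<^sup>2) (at 0)"
proof -
  note du = smooth_fun_has_vector_derivative[OF smooth_u assms, of y]
  note ddu = smooth_fun_has_vector_derivative[OF smooth_fun_partial[OF smooth_u assms] assms, of y]
  have "((\<lambda>t. Re (cnj (u (y + t *\<^sub>R e)) * partial e u (y + t *\<^sub>R e))) has_real_derivative
      Re (cnj (u (y + 0 *\<^sub>R e)) * partial e (partial e u) y
        + cnj (partial e u y) * partial e u (y + 0 *\<^sub>R e))) (at 0)"
    by (intro has_field_derivative_Re has_vector_derivative_mult has_vector_derivative_cnj du ddu)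
  then show ?thesis
    unfolding re_du_def by (rule DERIV_cong) (unfold cmod_power2, simp add: power2_eq_square)
qed

text \<open>Components along \<open>e\<close> of the regularised fields
  \<open>|x|\<^bsup>2-2p\<^esup> reg_chi(|u|\<^sup>2) Re(cnj u \<cdot> \<nabla>u)\<close> and \<open>|x|\<^bsup>-2p\<^esup> reg_psi(|u|\<^sup>2) x\<close>, and their
  derivatives along \<open>e\<close>.\<close>

definition grad_field :: "real \<Rightarrow> 'a \<Rightarrow> 'a \<Rightarrow> real" where
  "grad_field \<epsilon> e y = ((norm y)\<^sup>2) powr (1 - p) * reg_chi p \<epsilon> (modsq y) * re_du e y"

definition grad_field' :: "real \<Rightarrow> 'a \<Rightarrow> 'a \<Rightarrow> real" where
  "grad_field' \<epsilon> e y =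
     (1 - p) * ((norm y)\<^sup>2) powr (- p) * (2 * (y \<bullet> e)) * reg_chi p \<epsilon> (modsq y) * re_du e y
     + ((norm y)\<^sup>2) powr (1 - p) * (reg_chi' p \<epsilon> (modsq y) * (2 * re_du e y)) * re_du e y
     + ((norm y)\<^sup>2) powr (1 - p) * reg_chi p \<epsilon> (modsq y)
        * (Re (cnj (u y) * partial e (partial e u) y) + (cmod (partial e u y))\<^sup>2)"

definition radial_field :: "real \<Rightarrow> 'a \<Rightarrow> 'a \<Rightarrow> real" where
  "radial_field \<epsilon> e y = ((norm y)\<^sup>2) powr (- p) * (y \<bullet> e) * reg_psi p \<epsilon> (modsq y)"

definition radial_field' :: "real \<Rightarrow> 'a \<Rightarrow> 'a \<Rightarrow> real" where
  "radial_field' \<epsilon> e y =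
     - p * ((norm y)\<^sup>2) powr (- p - 1) * (2 * (y \<bullet> e)) * (y \<bullet> e) * reg_psi p \<epsilon> (modsq y)
     + ((norm y)\<^sup>2) powr (- p) * reg_psi p \<epsilon> (modsq y)
     + ((norm y)\<^sup>2) powr (- p) * (y \<bullet> e) * (reg_psi' p \<epsilon> (modsq y) * (2 * re_du e y))"

definition div_grad_pos :: "real \<Rightarrow> 'a \<Rightarrow> real" where
  "div_grad_pos \<epsilon> y = ((norm y)\<^sup>2) powr (1 - p)
     * (2 * reg_chi' p \<epsilon> (modsq y) * re_du_sq y + reg_chi p \<epsilon> (modsq y) * grad_norm_sq u y)"

definition div_grad_rest :: "real \<Rightarrow> 'a \<Rightarrow> real" where
  "div_grad_rest \<epsilon> y = 2 * (1 - p) * ((norm y)\<^sup>2) powr (- p) * reg_chi p \<epsilon> (modsq y) * re_xdu y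
     + ((norm y)\<^sup>2) powr (1 - p) * reg_chi p \<epsilon> (modsq y) * re_lap y"

definition div_radial :: "real \<Rightarrow> 'a \<Rightarrow> real" where
  "div_radial \<epsilon> y = (DIM('a) - 2 * p) * ((norm y)\<^sup>2) powr (- p) * reg_psi p \<epsilon> (modsq y)
     + 2 * ((norm y)\<^sup>2) powr (- p) * reg_psi' p \<epsilon> (modsq y) * re_xdu y"

lemma has_real_derivative_grad_field:
  assumes "e \<in> Basis" "0 < \<epsilon>" "y \<in> supp_u"
  shows "((\<lambda>t. grad_field \<epsilon> e (y + t *\<^sub>R e)) has_real_derivative grad_field' \<epsilon> e y) (at 0)"
proof -
  have "0 < (norm (y + 0 *\<^sub>R e))\<^sup>2" using norm_pos_on_supp_u[OF assms(3)] by simp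
  from DERIV_fun_powr[OF has_real_derivative_norm_sq_line this, of "1 - p"]
  have weight: "((\<lambda>t. ((norm (y + t *\<^sub>R e))\<^sup>2) powr (1 - p)) has_real_derivative
      (1 - p) * ((norm y)\<^sup>2) powr (- p) * (2 * (y \<bullet> e))) (at 0)"
    by simp
  have chi: "((\<lambda>t. reg_chi p \<epsilon> (modsq (y + t *\<^sub>R e))) has_real_derivative
      reg_chi' p \<epsilon> (modsq y) * (2 * re_du e y)) (at 0)"
    using has_real_derivative_reg_chi[OF has_real_derivative_modsq[OF assms(1)] modsq_nonneg assms(2)]
    by simp
  from DERIV_mult'[OF DERIV_mult'[OF weight chi] has_real_derivative_re_du[OF assms(1)]]
  show ?thesis
    unfolding grad_field_def by (rule DERIV_cong) (simp add: grad_field'_def algebra_simps)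
qed

lemma has_real_derivative_radial_field:
  assumes "e \<in> Basis" "0 < \<epsilon>" "y \<in> supp_u"
  shows "((\<lambda>t. radial_field \<epsilon> e (y + t *\<^sub>R e)) has_real_derivative radial_field' \<epsilon> e y) (at 0)"
proof -
  have "0 < (norm (y + 0 *\<^sub>R e))\<^sup>2" using norm_pos_on_supp_u[OF assms(3)] by simp
  from DERIV_fun_powr[OF has_real_derivative_norm_sq_line this, of "- p"]
  have weight: "((\<lambda>t. ((norm (y + t *\<^sub>R e))\<^sup>2) powr (- p)) has_real_derivative
      - p * ((norm y)\<^sup>2) powr (- p - 1) * (2 * (y \<bullet> e))) (at 0)"
    by simp
  have psi: "((\<lambda>t. reg_psi p \<epsilon> (modsq (y + t *\<^sub>R e))) has_real_derivative
      reg_psi' p \<epsilon> (modsq y) * (2 * re_du e y)) (at 0)"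
    using has_real_derivative_reg_psi[OF has_real_derivative_modsq[OF assms(1)] modsq_nonneg assms(2)]
    by simp
  from DERIV_mult'[OF DERIV_mult'[OF weight has_real_derivative_inner_line[of y e]] psi]
  show ?thesis
    unfolding radial_field_def
    by (rule DERIV_cong) (use assms(1) in \<open>simp add: radial_field'_def algebra_simps\<close>)
qed

lemma sum_grad_field': "(\<Sum>e\<in>Basis. grad_field' \<epsilon> e y) = div_grad_pos \<epsilon> y + div_grad_rest \<epsilon> y"
proof -
  define a where "a = 2 * (1 - p) * ((norm y)\<^sup>2) powr (- p) * reg_chi p \<epsilon> (modsq y)"
  define b where "b = 2 * ((norm y)\<^sup>2) powr (1 - p) * reg_chi' p \<epsilon> (modsq y)"
  define c where "c = ((norm y)\<^sup>2) powr (1 - p) * reg_chi p \<epsilon> (modsq y)"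
  have "(\<Sum>e\<in>Basis. grad_field' \<epsilon> e y) = (\<Sum>e\<in>Basis. a * ((y \<bullet> e) * re_du e y) + b * (re_du e y)\<^sup>2
      + c * (Re (cnj (u y) * partial e (partial e u) y) + (cmod (partial e u y))\<^sup>2))"
    by (simp add: grad_field'_def a_def b_def c_def power2_eq_square algebra_simps)
  also have "\<dots> = a * re_xdu y + b * re_du_sq y + c * (re_lap y + grad_norm_sq u y)"
    unfolding re_xdu_def re_du_sq_def re_lap_eq_sum grad_norm_sq_def
    by (simp only: sum.distrib sum_distrib_left distrib_left)
  finally show ?thesis
    by (simp add: div_grad_pos_def div_grad_rest_def a_def b_def c_def algebra_simps)
qed

lemma sum_radial_field': "(\<Sum>e\<in>Basis. radial_field' \<epsilon> e y) = div_radial \<epsilon> y"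
proof -
  define r where "r = (norm y)\<^sup>2"
  have r: "(\<Sum>e\<in>Basis. (y \<bullet> e) * (y \<bullet> e)) = r" "0 \<le> r"
    unfolding r_def power2_norm_eq_inner euclidean_inner[of y y] by (simp_all add: sum_nonneg)
  define a where "a = - 2 * p * r powr (- p - 1) * reg_psi p \<epsilon> (modsq y)"
  define b where "b = r powr (- p) * reg_psi p \<epsilon> (modsq y)"
  define c where "c = 2 * r powr (- p) * reg_psi' p \<epsilon> (modsq y)"
  have "(\<Sum>e\<in>Basis. radial_field' \<epsilon> e y) =
      (\<Sum>e\<in>Basis. a * ((y \<bullet> e) * (y \<bullet> e)) + b + c * ((y \<bullet> e) * re_du e y))"
    unfolding radial_field'_def r_def[symmetric] a_def b_def c_def by (simp add: algebra_simps)
  also have "\<dots> = a * (\<Sum>e\<in>Basis. (y \<bullet> e) * (y \<bullet> e)) + DIM('a) * b + c * re_xdu y"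
    unfolding re_xdu_def by (simp add: sum.distrib sum_distrib_left)
  also have "a * (\<Sum>e\<in>Basis. (y \<bullet> e) * (y \<bullet> e)) = - 2 * p * r powr (- p) * reg_psi p \<epsilon> (modsq y)"
    unfolding r(1) a_def using mult_powr_eq[OF r(2), of "- p - 1" "- p"] by (simp add: mult_ac)
  finally show ?thesis
    unfolding div_radial_def r_def[symmetric] b_def c_def by (simp add: algebra_simps)
qed

lemma has_bochner_integral_sum_line_derivatives:
  fixes F D :: "'a \<Rightarrow> 'a \<Rightarrow> real"
  assumes cont: "\<And>e. e \<in> Basis \<Longrightarrow> continuous_on supp_u (F e)"
      "\<And>e. e \<in> Basis \<Longrightarrow> continuous_on supp_u (D e)"
    and vanish: "\<And>e y. y \<notin> supp_u \<Longrightarrow> F e y = 0" "\<And>e y. y \<notin> supp_u \<Longrightarrow> D e y = 0"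
    and der: "\<And>e y. e \<in> Basis \<Longrightarrow> y \<in> supp_u \<Longrightarrow>
      ((\<lambda>t. F e (y + t *\<^sub>R e)) has_real_derivative D e y) (at 0)"
  shows "has_bochner_integral lborel (\<lambda>y. \<Sum>e\<in>Basis. D e y) 0"
proof -
  have der_everywhere: "((\<lambda>t. F e (y + t *\<^sub>R e)) has_real_derivative D e y) (at 0)"
    if "e \<in> Basis" for e y
  proof (cases "y \<in> supp_u")
    case False
    have "((\<lambda>t. F e (y + t *\<^sub>R e)) has_vector_derivative 0) (at 0)"
      by (rule has_vector_derivative_line_vanishing[OF open_outside_supp_u]) (use False vanish in auto)
    with False vanish(2) show ?thesis by (simp add: has_real_derivative_iff_has_vector_derivative)
  qed (use der that in auto)
  have D: "integrable lborel (D e)" "integral\<^sup>L lborel (D e) = 0" if "e \<in> Basis" for e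
    using integral_line_derivative_eq_0[OF compact_supp_u cont(1)[OF that] vanish(1)
        cont(2)[OF that] vanish(2) der_everywhere[OF that]]
    by auto
  have int: "integrable lborel (\<lambda>y. \<Sum>e\<in>Basis. D e y)"
    by (rule Bochner_Integration.integrable_sum) (rule D(1))
  have "(\<integral>y. (\<Sum>e\<in>Basis. D e y) \<partial>lborel) = (\<Sum>e\<in>Basis. integral\<^sup>L lborel (D e))"
    by (rule Bochner_Integration.integral_sum) (rule D(1))
  also have "\<dots> = 0"
    by (rule sum.neutral) (use D(2) in blast)
  finally show ?thesis
    using int by (simp add: has_bochner_integral_iff)
qed

text \<open>The next two facts are the side conditions that \<open>continuous_intros\<close> generates for powers.\<close>

lemma norm_sq_ne_0_on_supp_u: "\<forall>y\<in>supp_u. (norm y)\<^sup>2 \<noteq> 0"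
  using norm_pos_on_supp_u by fastforce

lemma modsq_add_ne_0: "0 < \<epsilon> \<Longrightarrow> \<forall>y\<in>A. modsq y + \<epsilon> \<noteq> 0"
  using modsq_nonneg by (metis add_nonneg_pos less_irrefl)

lemma has_bochner_integral_div_grad:
  assumes "0 < \<epsilon>"
  shows "has_bochner_integral lborel (\<lambda>y. div_grad_pos \<epsilon> y + div_grad_rest \<epsilon> y) 0"
proof -
  note cont = continuous_on_u continuous_on_partial_u continuous_on_partial2_u continuous_on_modsq
    norm_sq_ne_0_on_supp_u modsq_add_ne_0[OF assms]
  have "continuous_on supp_u (grad_field \<epsilon> e)" "continuous_on supp_u (grad_field' \<epsilon> e)"
    if "e \<in> Basis" for e
    unfolding grad_field_def grad_field'_def reg_chi_def reg_chi'_def re_du_def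
    by (intro continuous_intros cont that)+
  moreover have "grad_field \<epsilon> e y = 0" "grad_field' \<epsilon> e y = 0" if "y \<notin> supp_u" for e y
    using u_eq_0_outside[OF that] partial_u_eq_0_outside[OF that]
    by (simp_all add: grad_field_def grad_field'_def re_du_def)
  ultimately have "has_bochner_integral lborel (\<lambda>y. \<Sum>e\<in>Basis. grad_field' \<epsilon> e y) 0"
    using has_real_derivative_grad_field[OF _ assms] by (rule has_bochner_integral_sum_line_derivatives)
  then show ?thesis by (simp only: sum_grad_field')
qed

lemma has_bochner_integral_div_radial:
  assumes "0 < \<epsilon>"
  shows "has_bochner_integral lborel (div_radial \<epsilon>) 0"
proof -
  note cont = continuous_on_u continuous_on_partial_u continuous_on_modsq
    norm_sq_ne_0_on_supp_u modsq_add_ne_0[OF assms]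
  have "continuous_on supp_u (radial_field \<epsilon> e)" "continuous_on supp_u (radial_field' \<epsilon> e)"
    if "e \<in> Basis" for e
    unfolding radial_field_def radial_field'_def reg_psi_def reg_psi'_def re_du_def
    by (intro continuous_intros cont that)+
  moreover have "radial_field \<epsilon> e y = 0" "radial_field' \<epsilon> e y = 0" if "y \<notin> supp_u" for e y
    using u_eq_0_outside[OF that] partial_u_eq_0_outside[OF that]
    by (simp_all add: radial_field_def radial_field'_def re_du_def modsq_def)
  ultimately have "has_bochner_integral lborel (\<lambda>y. \<Sum>e\<in>Basis. radial_field' \<epsilon> e y) 0"
    using has_real_derivative_radial_field[OF _ assms] by (rule has_bochner_integral_sum_line_derivatives)
  then show ?thesis by (simp only: sum_radial_field')
qed

text \<open>Where \<open>u\<close> vanishes, \<open>weight = 0\<close> (as \<open>0 powr a = 0\<close>), so the junk value of the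
  gradient of \<open>|u|\<close> there does not matter.\<close>

definition weight :: "'a \<Rightarrow> real" where
  "weight y = cmod (u y) powr (p - 2) / norm y powr (2 * (p - 1))"

definition grad_term :: "'a \<Rightarrow> real" where
  "grad_term y = weight y * grad_norm_sq u y"

definition grad_abs_term :: "'a \<Rightarrow> real" where
  "grad_abs_term y = weight y * (norm (grad (\<lambda>y. cmod (u y)) y))\<^sup>2"

definition radial_term :: "'a \<Rightarrow> real" where
  "radial_term y = weight y * cmod (u y) / (norm y)\<^sup>2 * (grad (\<lambda>y. cmod (u y)) y \<bullet> y)"

definition lap_term :: "'a \<Rightarrow> real" where
  "lap_term y = weight y * re_lap y"

definition hardy_term :: "'a \<Rightarrow> real" where
  "hardy_term y = cmod (u y) powr p / norm y powr (2 * p)"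

lemma modsq_powr_half: "modsq y powr (a / 2) = cmod (u y) powr a"
  by (simp add: modsq_eq sq_powr_half)

lemma weight_eq: "weight y = ((norm y)\<^sup>2) powr (1 - p) * modsq y powr ((p - 2) / 2)"
  using norm_sq_powr_minus[of y "p - 1"] by (simp add: weight_def modsq_powr_half)

lemma weight_eq_0: "u y = 0 \<Longrightarrow> weight y = 0"
  by (simp add: weight_def)

lemma partial_cmod_u:
  assumes "e \<in> Basis" "u x \<noteq> 0"
  shows "partial e (\<lambda>y. cmod (u y)) x = re_du e x / cmod (u x)"
proof -
  have "0 < modsq (x + 0 *\<^sub>R e)" using assms(2) by (simp add: modsq_pos_iff)
  from DERIV_chain2[OF DERIV_real_sqrt[OF this] has_real_derivative_modsq[OF assms(1)]]
  have "((\<lambda>t. cmod (u (x + t *\<^sub>R e))) has_real_derivative re_du e x / cmod (u x)) (at 0)"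
    unfolding sqrt_modsq[symmetric] by (rule DERIV_cong) (simp add: field_simps)
  then show ?thesis
    unfolding partial_def by (intro vector_derivative_at) (simp add: has_real_derivative_iff_has_vector_derivative)
qed

lemma grad_cmod_u:
  "u x \<noteq> 0 \<Longrightarrow> grad (\<lambda>y. cmod (u y)) x = (\<Sum>e\<in>Basis. (re_du e x / cmod (u x)) *\<^sub>R e)"
  unfolding grad_def by (rule sum.cong) (simp_all add: partial_cmod_u)

lemma norm_grad_cmod_u_sq:
  "u x \<noteq> 0 \<Longrightarrow> (norm (grad (\<lambda>y. cmod (u y)) x))\<^sup>2 = re_du_sq x / modsq x"
  by (simp add: grad_cmod_u norm_sum_Basis_sq re_du_sq_def modsq_eq power_divide sum_divide_distrib)

lemma grad_cmod_u_inner: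
  "u x \<noteq> 0 \<Longrightarrow> grad (\<lambda>y. cmod (u y)) x \<bullet> x = re_xdu x / cmod (u x)"
  by (simp add: grad_cmod_u inner_sum_Basis_scaleR re_xdu_def sum_divide_distrib mult_ac)

lemma grad_term_eq: "grad_term y = ((norm y)\<^sup>2) powr (1 - p) * modsq y powr ((p - 2) / 2) * grad_norm_sq u y"
  by (simp add: grad_term_def weight_eq)

lemma lap_term_eq: "lap_term y = ((norm y)\<^sup>2) powr (1 - p) * modsq y powr ((p - 2) / 2) * re_lap y"
  by (simp add: lap_term_def weight_eq)

lemma hardy_term_eq: "hardy_term y = ((norm y)\<^sup>2) powr (- p) * modsq y powr (p / 2)"
  by (simp add: hardy_term_def norm_sq_powr_minus modsq_powr_half)

lemma grad_abs_term_eq: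
  "grad_abs_term y = ((norm y)\<^sup>2) powr (1 - p) * modsq y powr ((p - 4) / 2) * re_du_sq y"
proof (cases "u y = 0")
  case False
  then have "0 < modsq y" by (simp add: modsq_pos_iff)
  have "grad_abs_term y = ((norm y)\<^sup>2) powr (1 - p) * (modsq y powr ((p - 2) / 2) / modsq y) * re_du_sq y"
    using False by (simp add: grad_abs_term_def weight_eq norm_grad_cmod_u_sq)
  also have "modsq y powr ((p - 2) / 2) / modsq y = modsq y powr ((p - 4) / 2)"
    using \<open>0 < modsq y\<close> by (rule powr_divide_self) (simp add: field_simps)
  finally show ?thesis .
qed (simp add: grad_abs_term_def weight_eq_0 eq_0_where_u_eq_0)

lemma radial_term_eq: "radial_term y = ((norm y)\<^sup>2) powr (- p) * modsq y powr ((p - 2) / 2) * re_xdu y"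
proof (cases "u y = 0")
  case False
  have "0 < (norm y)\<^sup>2" using norm_pos_on_supp_u[OF in_supp_u[OF False]] by simp
  have "radial_term y = (((norm y)\<^sup>2) powr (1 - p) / (norm y)\<^sup>2) * modsq y powr ((p - 2) / 2) * re_xdu y"
    using False by (simp add: radial_term_def weight_eq grad_cmod_u_inner)
  also have "((norm y)\<^sup>2) powr (1 - p) / (norm y)\<^sup>2 = ((norm y)\<^sup>2) powr (- p)"
    using \<open>0 < (norm y)\<^sup>2\<close> by (rule powr_divide_self) simp
  finally show ?thesis .
qed (simp add: radial_term_def weight_eq_0 eq_0_where_u_eq_0)

lemma weight_mult_modsq: "weight y * modsq y / (norm y)\<^sup>2 = hardy_term y"
proof (cases "y = 0")
  case False
  then have "0 < (norm y)\<^sup>2" by simp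
  have "weight y * modsq y / (norm y)\<^sup>2
      = (((norm y)\<^sup>2) powr (1 - p) / (norm y)\<^sup>2) * (modsq y * modsq y powr ((p - 2) / 2))"
    by (simp add: weight_eq)
  also have "((norm y)\<^sup>2) powr (1 - p) / (norm y)\<^sup>2 = ((norm y)\<^sup>2) powr (- p)"
    using \<open>0 < (norm y)\<^sup>2\<close> by (rule powr_divide_self) simp
  also have "modsq y * modsq y powr ((p - 2) / 2) = modsq y powr (p / 2)"
    by (rule mult_powr_eq[OF modsq_nonneg]) (simp add: field_simps)
  finally show ?thesis by (simp add: hardy_term_eq)
qed (simp add: weight_def hardy_term_def)

lemma grad_abs_term_nonneg: "0 \<le> grad_abs_term y"
  by (simp add: grad_abs_term_eq re_du_sq_nonneg)

lemma grad_abs_term_le_grad_term: "grad_abs_term y \<le> grad_term y"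
proof -
  have "modsq y powr ((p - 4) / 2) * re_du_sq y \<le> modsq y powr ((p - 4) / 2) * (modsq y * grad_norm_sq u y)"
    by (intro mult_left_mono re_du_sq_le) simp
  also have "\<dots> = (modsq y * modsq y powr ((p - 4) / 2)) * grad_norm_sq u y"
    by (simp only: mult_ac)
  also have "modsq y * modsq y powr ((p - 4) / 2) = modsq y powr ((p - 2) / 2)"
    by (rule mult_powr_eq[OF modsq_nonneg]) (simp add: field_simps)
  finally show ?thesis
    unfolding grad_abs_term_eq grad_term_eq mult.assoc by (rule mult_left_mono) simp
qed

lemma measurable_terms [measurable]:
  "grad_term \<in> borel_measurable borel" "grad_abs_term \<in> borel_measurable borel"
  "radial_term \<in> borel_measurable borel" "lap_term \<in> borel_measurable borel"
  "hardy_term \<in> borel_measurable borel"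
  unfolding grad_term_eq[abs_def] grad_abs_term_eq[abs_def] radial_term_eq[abs_def]
    lap_term_eq[abs_def] hardy_term_eq[abs_def]
  by measurable

lemma measurable_divergences [measurable]:
  "div_grad_pos \<epsilon> \<in> borel_measurable borel" "div_grad_rest \<epsilon> \<in> borel_measurable borel"
  "div_radial \<epsilon> \<in> borel_measurable borel"
  unfolding div_grad_pos_def div_grad_rest_def div_radial_def reg_chi_def reg_chi'_def
    reg_psi_def reg_psi'_def
  by measurable

definition radial_bound :: "'a \<Rightarrow> real" where
  "radial_bound y = ((norm y)\<^sup>2) powr (- p) * (modsq y + 1) powr ((p - 1) / 2) * xdu_bound y"

definition lap_bound :: "'a \<Rightarrow> real" where
  "lap_bound y = ((norm y)\<^sup>2) powr (1 - p) * (modsq y + 1) powr ((p - 1) / 2) * cmod (laplacian u y)"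

definition hardy_bound :: "'a \<Rightarrow> real" where
  "hardy_bound y = ((norm y)\<^sup>2) powr (- p) * (modsq y + 1) powr (p / 2)"

definition grad_bound :: "'a \<Rightarrow> real" where
  "grad_bound y = ((norm y)\<^sup>2) powr (1 - p) * grad_norm_sq u y * (modsq y * (modsq y + 1) powr ((p - 4) / 2))"

lemma bounds_nonneg:
  "0 \<le> radial_bound y" "0 \<le> lap_bound y" "0 \<le> hardy_bound y" "0 \<le> grad_bound y"
  by (simp_all add: radial_bound_def lap_bound_def hardy_bound_def grad_bound_def xdu_bound_nonneg
      modsq_nonneg grad_norm_sq_def sum_nonneg)

lemma continuous_on_bounds:
  "continuous_on supp_u radial_bound" "continuous_on supp_u lap_bound"
  "continuous_on supp_u hardy_bound" "continuous_on supp_u grad_bound"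
  unfolding radial_bound_def lap_bound_def hardy_bound_def grad_bound_def
  by (intro continuous_intros continuous_on_modsq continuous_on_xdu_bound continuous_on_laplacian
      continuous_on_grad_norm_sq norm_sq_ne_0_on_supp_u modsq_add_ne_0[of 1]; simp)+

lemma integrable_indicator_supp_u:
  fixes h :: "'a \<Rightarrow> real"
  assumes "continuous_on supp_u h"
  shows "integrable lborel (\<lambda>y. indicator supp_u y * h y)"
  using borel_integrable_compact[OF compact_supp_u assms] by simp

lemma abs_mult_re_xdu_le:
  assumes "\<bar>c\<bar> * sqrt (modsq y) \<le> B"
  shows "\<bar>c * re_xdu y\<bar> \<le> B * xdu_bound y"
proof -
  have "\<bar>c * re_xdu y\<bar> \<le> \<bar>c\<bar> * (cmod (u y) * xdu_bound y)"
    unfolding abs_mult by (rule mult_left_mono[OF abs_re_xdu_le abs_ge_zero])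
  also have "\<dots> = (\<bar>c\<bar> * sqrt (modsq y)) * xdu_bound y"
    by (simp add: sqrt_modsq)
  also have "\<dots> \<le> B * xdu_bound y"
    by (rule mult_right_mono[OF assms xdu_bound_nonneg])
  finally show ?thesis .
qed

lemma abs_mult_re_lap_le:
  assumes "\<bar>c\<bar> * sqrt (modsq y) \<le> B"
  shows "\<bar>c * re_lap y\<bar> \<le> B * cmod (laplacian u y)"
proof -
  have "\<bar>c * re_lap y\<bar> \<le> \<bar>c\<bar> * (cmod (u y) * cmod (laplacian u y))"
    unfolding abs_mult by (rule mult_left_mono[OF abs_re_lap_le abs_ge_zero])
  also have "\<dots> = (\<bar>c\<bar> * sqrt (modsq y)) * cmod (laplacian u y)"
    by (simp add: sqrt_modsq)
  also have "\<dots> \<le> B * cmod (laplacian u y)"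
    by (rule mult_right_mono[OF assms norm_ge_zero])
  finally show ?thesis .
qed

lemma abs_radial_term_le: "\<bar>radial_term y\<bar> \<le> indicator supp_u y * radial_bound y"
proof (cases "u y = 0")
  case False
  have "\<bar>radial_term y\<bar> = ((norm y)\<^sup>2) powr (- p) * \<bar>modsq y powr ((p - 2) / 2) * re_xdu y\<bar>"
    by (simp add: radial_term_eq abs_mult)
  also have "\<dots> \<le> ((norm y)\<^sup>2) powr (- p) * ((modsq y + 1) powr ((p - 1) / 2) * xdu_bound y)"
    using p_gt_1 by (intro mult_left_mono abs_mult_re_xdu_le) (simp_all add: powr_mult_sqrt_le modsq_nonneg)
  also have "\<dots> = indicator supp_u y * radial_bound y"
    using in_supp_u[OF False] by (simp add: radial_bound_def mult_ac)
  finally show ?thesis .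
qed (simp add: radial_term_eq eq_0_where_u_eq_0 indicator_def bounds_nonneg)

lemma abs_lap_term_le: "\<bar>lap_term y\<bar> \<le> indicator supp_u y * lap_bound y"
proof (cases "u y = 0")
  case False
  have "\<bar>lap_term y\<bar> = ((norm y)\<^sup>2) powr (1 - p) * \<bar>modsq y powr ((p - 2) / 2) * re_lap y\<bar>"
    by (simp add: lap_term_eq abs_mult)
  also have "\<dots> \<le> ((norm y)\<^sup>2) powr (1 - p) * ((modsq y + 1) powr ((p - 1) / 2) * cmod (laplacian u y))"
    using p_gt_1 by (intro mult_left_mono abs_mult_re_lap_le) (simp_all add: powr_mult_sqrt_le modsq_nonneg)
  also have "\<dots> = indicator supp_u y * lap_bound y"
    using in_supp_u[OF False] by (simp add: lap_bound_def mult_ac)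
  finally show ?thesis .
qed (simp add: lap_term_eq eq_0_where_u_eq_0 indicator_def bounds_nonneg)

lemma abs_hardy_term_le: "\<bar>hardy_term y\<bar> \<le> indicator supp_u y * hardy_bound y"
proof (cases "u y = 0")
  case False
  have "modsq y powr (p / 2) \<le> (modsq y + 1) powr (p / 2)"
    using p_gt_1 by (intro powr_mono2) (simp_all add: modsq_nonneg)
  then have "((norm y)\<^sup>2) powr (- p) * modsq y powr (p / 2) \<le> ((norm y)\<^sup>2) powr (- p) * (modsq y + 1) powr (p / 2)"
    by (rule mult_left_mono) simp
  then show ?thesis
    using in_supp_u[OF False] by (simp add: hardy_term_eq hardy_bound_def)
qed (simp add: hardy_term_eq eq_0_where_u_eq_0 indicator_def bounds_nonneg)

lemma integrable_radial_term: "integrable lborel radial_term"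
  and integrable_lap_term: "integrable lborel lap_term"
  and integrable_hardy_term: "integrable lborel hardy_term"
  by (intro integrable_dominated_compact_support[OF compact_supp_u _ continuous_on_bounds(1)]
      integrable_dominated_compact_support[OF compact_supp_u _ continuous_on_bounds(2)]
      integrable_dominated_compact_support[OF compact_supp_u _ continuous_on_bounds(3)]
      abs_radial_term_le abs_lap_term_le abs_hardy_term_le measurable_terms)+

lemma div_grad_pos_nonneg: "0 < \<epsilon> \<Longrightarrow> 0 \<le> div_grad_pos \<epsilon> y"
  unfolding div_grad_pos_def using p_gt_1
  by (intro mult_nonneg_nonneg reg_grad_form_nonneg powr_ge_zero modsq_nonneg re_du_sq_nonneg
      re_du_sq_le) (simp_all add: grad_norm_sq_def sum_nonneg)

lemma div_grad_pos_le:
  assumes "0 < \<epsilon>" "\<epsilon> \<le> 1"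
  shows "div_grad_pos \<epsilon> y \<le> (3 + \<bar>p - 4\<bar>) * (grad_term y + indicator supp_u y * grad_bound y)"
proof (cases "y \<in> supp_u")
  case True
  have "0 \<le> grad_norm_sq u y" by (simp add: grad_norm_sq_def sum_nonneg)
  from reg_grad_form_le[OF assms modsq_nonneg this re_du_sq_nonneg re_du_sq_le, of p]
  have "div_grad_pos \<epsilon> y \<le> ((norm y)\<^sup>2) powr (1 - p) * ((3 + \<bar>p - 4\<bar>) * grad_norm_sq u y
      * (modsq y powr ((p - 2) / 2) + modsq y * (modsq y + 1) powr ((p - 4) / 2)))"
    unfolding div_grad_pos_def by (rule mult_left_mono) simp
  with True show ?thesis by (simp add: grad_term_eq grad_bound_def algebra_simps)
next
  case False
  then have "div_grad_pos \<epsilon> y = 0"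
    by (simp add: div_grad_pos_def grad_norm_sq_def partial_u_eq_0_outside u_eq_0_outside
        eq_0_where_u_eq_0)
  moreover have "0 \<le> grad_term y"
    by (simp add: grad_term_eq grad_norm_sq_def sum_nonneg)
  ultimately show ?thesis using False by simp
qed

lemma abs_div_grad_rest_le:
  assumes "0 < \<epsilon>" "\<epsilon> \<le> 1"
  shows "\<bar>div_grad_rest \<epsilon> y\<bar> \<le> indicator supp_u y * (2 * (p - 1) * radial_bound y + lap_bound y)"
proof (cases "y \<in> supp_u")
  case True
  define ch where "ch = reg_chi p \<epsilon> (modsq y)"
  have ch: "\<bar>ch\<bar> * sqrt (modsq y) \<le> (modsq y + 1) powr ((p - 1) / 2)"
    unfolding ch_def using p_gt_1 assms by (intro abs_reg_chi_mult_sqrt_le modsq_nonneg) auto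
  have "\<bar>div_grad_rest \<epsilon> y\<bar> \<le> \<bar>2 * (1 - p) * ((norm y)\<^sup>2) powr (- p) * (ch * re_xdu y)\<bar>
      + \<bar>((norm y)\<^sup>2) powr (1 - p) * (ch * re_lap y)\<bar>"
    unfolding div_grad_rest_def ch_def[symmetric] mult.assoc[symmetric] by (rule abs_triangle_ineq)
  also have "\<dots> = 2 * (p - 1) * ((norm y)\<^sup>2) powr (- p) * \<bar>ch * re_xdu y\<bar>
      + ((norm y)\<^sup>2) powr (1 - p) * \<bar>ch * re_lap y\<bar>"
    using p_gt_1 by (simp add: abs_mult)
  also have "\<dots> \<le> 2 * (p - 1) * ((norm y)\<^sup>2) powr (- p) * ((modsq y + 1) powr ((p - 1) / 2) * xdu_bound y)
      + ((norm y)\<^sup>2) powr (1 - p) * ((modsq y + 1) powr ((p - 1) / 2) * cmod (laplacian u y))"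
    using p_gt_1 abs_mult_re_xdu_le[OF ch] abs_mult_re_lap_le[OF ch]
    by (intro add_mono mult_left_mono) auto
  finally show ?thesis
    using True by (simp add: radial_bound_def lap_bound_def algebra_simps)
qed (simp add: div_grad_rest_def u_eq_0_outside eq_0_where_u_eq_0)

lemma abs_div_radial_le:
  assumes "0 < \<epsilon>" "\<epsilon> \<le> 1"
  shows "\<bar>div_radial \<epsilon> y\<bar> \<le> indicator supp_u y * (\<bar>DIM('a) - 2 * p\<bar> * hardy_bound y + p * radial_bound y)"
proof (cases "y \<in> supp_u")
  case True
  define \<psi> where "\<psi> = reg_psi p \<epsilon> (modsq y)"
  define \<psi>' where "\<psi>' = reg_psi' p \<epsilon> (modsq y)"
  have \<psi>: "\<bar>\<psi>\<bar> \<le> (modsq y + 1) powr (p / 2)"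
    unfolding \<psi>_def using p_gt_1 assms by (intro abs_reg_psi_le modsq_nonneg) auto
  have \<psi>': "\<bar>\<psi>'\<bar> * sqrt (modsq y) \<le> p / 2 * (modsq y + 1) powr ((p - 1) / 2)"
    unfolding \<psi>'_def using p_gt_1 assms by (intro abs_reg_psi'_mult_sqrt_le modsq_nonneg) auto
  have "\<bar>div_radial \<epsilon> y\<bar> \<le> \<bar>(DIM('a) - 2 * p) * ((norm y)\<^sup>2) powr (- p) * \<psi>\<bar>
      + \<bar>2 * ((norm y)\<^sup>2) powr (- p) * (\<psi>' * re_xdu y)\<bar>"
    unfolding div_radial_def \<psi>_def[symmetric] \<psi>'_def[symmetric] mult.assoc[symmetric]
    by (rule abs_triangle_ineq)
  also have "\<dots> = \<bar>DIM('a) - 2 * p\<bar> * ((norm y)\<^sup>2) powr (- p) * \<bar>\<psi>\<bar>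
      + 2 * ((norm y)\<^sup>2) powr (- p) * \<bar>\<psi>' * re_xdu y\<bar>"
    by (simp add: abs_mult)
  also have "\<dots> \<le> \<bar>DIM('a) - 2 * p\<bar> * ((norm y)\<^sup>2) powr (- p) * (modsq y + 1) powr (p / 2)
      + 2 * ((norm y)\<^sup>2) powr (- p) * (p / 2 * (modsq y + 1) powr ((p - 1) / 2) * xdu_bound y)"
    using \<psi> abs_mult_re_xdu_le[OF \<psi>'] by (intro add_mono mult_left_mono) auto
  finally show ?thesis
    using True by (simp add: hardy_bound_def radial_bound_def algebra_simps)
qed (simp add: div_radial_def u_eq_0_outside eq_0_where_u_eq_0 modsq_def)

section \<open>Removing the regularisation\<close>

lemma tendsto_div_grad_pos:
  assumes "\<epsilon> \<longlonglongrightarrow> 0"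
  shows "(\<lambda>n. div_grad_pos (\<epsilon> n) y) \<longlonglongrightarrow> (p - 2) * grad_abs_term y + grad_term y"
proof (cases "u y = 0")
  case False
  then have s: "0 < modsq y" by (simp add: modsq_pos_iff)
  have lim: "(\<lambda>n. div_grad_pos (\<epsilon> n) y) \<longlonglongrightarrow> ((norm y)\<^sup>2) powr (1 - p) *
      (2 * ((p - 2) / 2 * modsq y powr ((p - 4) / 2)) * re_du_sq y + modsq y powr ((p - 2) / 2) * grad_norm_sq u y)"
    unfolding div_grad_pos_def by (intro tendsto_intros tendsto_reg_chi' tendsto_reg_chi assms s)
  have "((norm y)\<^sup>2) powr (1 - p) * (2 * ((p - 2) / 2 * modsq y powr ((p - 4) / 2)) * re_du_sq y
      + modsq y powr ((p - 2) / 2) * grad_norm_sq u y) = (p - 2) * grad_abs_term y + grad_term y"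
    by (simp add: grad_abs_term_eq grad_term_eq field_simps)
  from lim[unfolded this] show ?thesis .
qed (simp add: div_grad_pos_def grad_abs_term_eq grad_term_eq eq_0_where_u_eq_0)

lemma tendsto_div_grad_rest:
  assumes "\<epsilon> \<longlonglongrightarrow> 0"
  shows "(\<lambda>n. div_grad_rest (\<epsilon> n) y) \<longlonglongrightarrow> 2 * (1 - p) * radial_term y + lap_term y"
proof (cases "u y = 0")
  case False
  then have s: "0 < modsq y" by (simp add: modsq_pos_iff)
  have "(\<lambda>n. div_grad_rest (\<epsilon> n) y) \<longlonglongrightarrow>
      2 * (1 - p) * ((norm y)\<^sup>2) powr (- p) * modsq y powr ((p - 2) / 2) * re_xdu y
      + ((norm y)\<^sup>2) powr (1 - p) * modsq y powr ((p - 2) / 2) * re_lap y"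
    unfolding div_grad_rest_def by (intro tendsto_intros tendsto_reg_chi assms s)
  then show ?thesis by (simp only: radial_term_eq lap_term_eq mult.assoc)
qed (simp add: div_grad_rest_def radial_term_eq lap_term_eq eq_0_where_u_eq_0)

lemma tendsto_div_radial:
  assumes "\<epsilon> \<longlonglongrightarrow> 0" "\<And>n. 0 \<le> \<epsilon> n"
  shows "(\<lambda>n. div_radial (\<epsilon> n) y) \<longlonglongrightarrow> (DIM('a) - 2 * p) * hardy_term y + p * radial_term y"
proof (cases "u y = 0")
  case False
  then have s: "0 < modsq y" by (simp add: modsq_pos_iff)
  have lim: "(\<lambda>n. div_radial (\<epsilon> n) y) \<longlonglongrightarrow>
      (DIM('a) - 2 * p) * ((norm y)\<^sup>2) powr (- p) * modsq y powr (p / 2)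
      + 2 * ((norm y)\<^sup>2) powr (- p) * (p / 2 * modsq y powr (p / 2 - 1)) * re_xdu y"
    unfolding div_radial_def using p_gt_1
    by (intro tendsto_intros tendsto_reg_psi tendsto_reg_psi' assms s) simp
  have e: "modsq y powr (p / 2 - 1) = modsq y powr ((p - 2) / 2)"
    by (simp add: diff_divide_distrib)
  have "(DIM('a) - 2 * p) * ((norm y)\<^sup>2) powr (- p) * modsq y powr (p / 2)
      + 2 * ((norm y)\<^sup>2) powr (- p) * (p / 2 * modsq y powr (p / 2 - 1)) * re_xdu y
      = (DIM('a) - 2 * p) * hardy_term y + p * radial_term y"
    by (simp add: hardy_term_eq radial_term_eq e)
  from lim[unfolded this] show ?thesis .
qed (simp add: div_radial_def hardy_term_eq radial_term_eq eq_0_where_u_eq_0)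

lemma integrable_div_grad_rest:
  assumes "0 < \<epsilon>" "\<epsilon> \<le> 1"
  shows "integrable lborel (div_grad_rest \<epsilon>)"
  by (rule integrable_dominated_compact_support[OF compact_supp_u measurable_divergences(2) _
        abs_div_grad_rest_le[OF assms]])
     (intro continuous_intros continuous_on_bounds)

lemma has_bochner_integral_div_grad_pos:
  assumes "0 < \<epsilon>" "\<epsilon> \<le> 1"
  shows "has_bochner_integral lborel (div_grad_pos \<epsilon>) (- integral\<^sup>L lborel (div_grad_rest \<epsilon>))"
proof -
  have "has_bochner_integral lborel (\<lambda>y. (div_grad_pos \<epsilon> y + div_grad_rest \<epsilon> y) - div_grad_rest \<epsilon> y)
      (0 - integral\<^sup>L lborel (div_grad_rest \<epsilon>))"
    using has_bochner_integral_div_grad[OF assms(1)] integrable_div_grad_rest[OF assms]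
    by (intro has_bochner_integral_diff) (simp_all add: has_bochner_integral_integrable)
  then show ?thesis by simp
qed

lemma integral_div_grad_rest_tendsto:
  "(\<lambda>n. integral\<^sup>L lborel (div_grad_rest (eps_seq n)))
    \<longlonglongrightarrow> 2 * (1 - p) * integral\<^sup>L lborel radial_term + integral\<^sup>L lborel lap_term"
proof -
  have "(\<lambda>n. integral\<^sup>L lborel (div_grad_rest (eps_seq n)))
      \<longlonglongrightarrow> (\<integral>y. 2 * (1 - p) * radial_term y + lap_term y \<partial>lborel)"
  proof (rule integral_dominated_convergence)
    show "integrable lborel (\<lambda>y. indicator supp_u y * (2 * (p - 1) * radial_bound y + lap_bound y))"
      using continuous_on_bounds by (intro integrable_indicator_supp_u continuous_intros)
    show "AE y in lborel. norm (div_grad_rest (eps_seq n) y)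
        \<le> indicator supp_u y * (2 * (p - 1) * radial_bound y + lap_bound y)" for n
      using abs_div_grad_rest_le[OF eps_seq_pos eps_seq_le_1] by simp
    show "AE y in lborel. (\<lambda>n. div_grad_rest (eps_seq n) y) \<longlonglongrightarrow> 2 * (1 - p) * radial_term y + lap_term y"
      using tendsto_div_grad_rest[OF eps_seq_tendsto] by simp
  qed simp_all
  then show ?thesis
    using integrable_radial_term integrable_lap_term by simp
qed

lemma integral_div_grad_pos_tendsto:
  "(\<lambda>n. integral\<^sup>L lborel (div_grad_pos (eps_seq n)))
    \<longlonglongrightarrow> - (2 * (1 - p) * integral\<^sup>L lborel radial_term + integral\<^sup>L lborel lap_term)"
proof -
  have eq: "integral\<^sup>L lborel (div_grad_pos (eps_seq n)) = - integral\<^sup>L lborel (div_grad_rest (eps_seq n))" for n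
    using has_bochner_integral_div_grad_pos[OF eps_seq_pos eps_seq_le_1] by (rule has_bochner_integral_integral_eq)
  show ?thesis
    unfolding eq by (rule tendsto_minus[OF integral_div_grad_rest_tendsto])
qed

lemma grad_term_le_limit: "min 1 (p - 1) * grad_term y \<le> (p - 2) * grad_abs_term y + grad_term y"
proof (cases "p \<le> 2")
  case True
  have "0 \<le> (2 - p) * (grad_term y - grad_abs_term y)"
    using True grad_abs_term_le_grad_term[of y] by simp
  then have "0 \<le> 2 * grad_term y - 2 * grad_abs_term y - p * grad_term y + p * grad_abs_term y"
    by (simp add: algebra_simps)
  moreover have "min 1 (p - 1) = p - 1" using True by simp
  ultimately show ?thesis by (simp add: algebra_simps)
next
  case False
  then have "0 \<le> (p - 2) * grad_abs_term y"
    using grad_abs_term_nonneg[of y] by simp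
  then show ?thesis using False by simp
qed

text \<open>The gradient part of the divergence is nonnegative, so Fatou's lemma gives the integrability of
  its limit, which is not available from a pointwise bound where \<open>u\<close> vanishes and \<open>p < 2\<close>.\<close>

lemma integrable_grad_term: "integrable lborel grad_term"
proof (rule Bochner_Integration.integrable_bound)
  have limit_int: "integrable lborel (\<lambda>y. (p - 2) * grad_abs_term y + grad_term y)"
  proof (rule integrable_of_nonneg_tendsto)
    show "integrable lborel (div_grad_pos (eps_seq n))" for n
      using has_bochner_integral_div_grad_pos[OF eps_seq_pos eps_seq_le_1] by (simp add: has_bochner_integral_iff)
    show "0 \<le> div_grad_pos (eps_seq n) y" for n y
      by (rule div_grad_pos_nonneg[OF eps_seq_pos])
    show "(\<lambda>n. div_grad_pos (eps_seq n) y) \<longlonglongrightarrow> (p - 2) * grad_abs_term y + grad_term y" for y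
      by (rule tendsto_div_grad_pos[OF eps_seq_tendsto])
    show "(\<lambda>n. integral\<^sup>L lborel (div_grad_pos (eps_seq n)))
        \<longlonglongrightarrow> - (2 * (1 - p) * integral\<^sup>L lborel radial_term + integral\<^sup>L lborel lap_term)"
      by (rule integral_div_grad_pos_tendsto)
  qed simp
  then show "integrable lborel (\<lambda>y. ((p - 2) * grad_abs_term y + grad_term y) / min 1 (p - 1))"
    by (intro integrable_divide_zero)
  show "AE y in lborel. norm (grad_term y)
      \<le> norm (((p - 2) * grad_abs_term y + grad_term y) / min 1 (p - 1))"
  proof (rule AE_I2)
    fix y
    have "0 \<le> grad_abs_term y" "grad_abs_term y \<le> grad_term y"
      by (rule grad_abs_term_nonneg grad_abs_term_le_grad_term)+
    moreover have "0 < min 1 (p - 1)" using p_gt_1 by simp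
    ultimately show "norm (grad_term y) \<le> norm (((p - 2) * grad_abs_term y + grad_term y) / min 1 (p - 1))"
      using grad_term_le_limit[of y] by (simp add: field_simps)
  qed
qed simp

lemma integrable_grad_abs_term: "integrable lborel grad_abs_term"
proof (rule Bochner_Integration.integrable_bound[OF integrable_grad_term])
  show "AE y in lborel. norm (grad_abs_term y) \<le> norm (grad_term y)"
    using grad_abs_term_nonneg grad_abs_term_le_grad_term by (simp add: order_trans[OF _ abs_ge_self])
qed simp

lemma grad_identity:
  "(p - 2) * integral\<^sup>L lborel grad_abs_term + integral\<^sup>L lborel grad_term
    + 2 * (1 - p) * integral\<^sup>L lborel radial_term + integral\<^sup>L lborel lap_term = 0"
proof -
  have "(\<lambda>n. integral\<^sup>L lborel (div_grad_pos (eps_seq n)))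
      \<longlonglongrightarrow> (\<integral>y. (p - 2) * grad_abs_term y + grad_term y \<partial>lborel)"
  proof (rule integral_dominated_convergence)
    show "integrable lborel (\<lambda>y. (3 + \<bar>p - 4\<bar>) * (grad_term y + indicator supp_u y * grad_bound y))"
      using integrable_grad_term integrable_indicator_supp_u[OF continuous_on_bounds(4)] by simp
    show "AE y in lborel. norm (div_grad_pos (eps_seq n) y)
        \<le> (3 + \<bar>p - 4\<bar>) * (grad_term y + indicator supp_u y * grad_bound y)" for n
      using div_grad_pos_le[OF eps_seq_pos eps_seq_le_1] div_grad_pos_nonneg[OF eps_seq_pos] by simp
    show "AE y in lborel. (\<lambda>n. div_grad_pos (eps_seq n) y) \<longlonglongrightarrow> (p - 2) * grad_abs_term y + grad_term y"
      using tendsto_div_grad_pos[OF eps_seq_tendsto] by simp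
  qed simp_all
  then have "(\<integral>y. (p - 2) * grad_abs_term y + grad_term y \<partial>lborel)
      = - (2 * (1 - p) * integral\<^sup>L lborel radial_term + integral\<^sup>L lborel lap_term)"
    using integral_div_grad_pos_tendsto by (rule LIMSEQ_unique)
  then show ?thesis
    using integrable_grad_term integrable_grad_abs_term by simp
qed

lemma radial_identity:
  "p * integral\<^sup>L lborel radial_term + (DIM('a) - 2 * p) * integral\<^sup>L lborel hardy_term = 0"
proof -
  have "(\<lambda>n. integral\<^sup>L lborel (div_radial (eps_seq n)))
      \<longlonglongrightarrow> (\<integral>y. (DIM('a) - 2 * p) * hardy_term y + p * radial_term y \<partial>lborel)"
  proof (rule integral_dominated_convergence)
    show "integrable lborel (\<lambda>y. indicator supp_u y * (\<bar>DIM('a) - 2 * p\<bar> * hardy_bound y + p * radial_bound y))"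
      using continuous_on_bounds by (intro integrable_indicator_supp_u continuous_intros)
    show "AE y in lborel. norm (div_radial (eps_seq n) y)
        \<le> indicator supp_u y * (\<bar>DIM('a) - 2 * p\<bar> * hardy_bound y + p * radial_bound y)" for n
      using abs_div_radial_le[OF eps_seq_pos eps_seq_le_1] by simp
    show "AE y in lborel. (\<lambda>n. div_radial (eps_seq n) y)
        \<longlonglongrightarrow> (DIM('a) - 2 * p) * hardy_term y + p * radial_term y"
      using tendsto_div_radial[OF eps_seq_tendsto less_imp_le[OF eps_seq_pos]] by simp
  qed simp_all
  moreover have "integral\<^sup>L lborel (div_radial (eps_seq n)) = 0" for n
    using has_bochner_integral_div_radial[OF eps_seq_pos] by (simp add: has_bochner_integral_integral_eq)
  ultimately have "(\<integral>y. (DIM('a) - 2 * p) * hardy_term y + p * radial_term y \<partial>lborel) = 0"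
    by (simp add: LIMSEQ_const_iff)
  then show ?thesis
    using integrable_hardy_term integrable_radial_term by simp
qed

lemma shifted_grad_term_eq:
  "(if u y = 0 then 0 else cmod (u y) powr (p - 2) / norm y powr (2 * (p - 1)) *
      (norm (grad (\<lambda>y. cmod (u y)) y + (a * cmod (u y) / (norm y)\<^sup>2) *\<^sub>R y))\<^sup>2)
    = grad_abs_term y + 2 * a * radial_term y + a\<^sup>2 * hardy_term y"
proof (cases "u y = 0")
  case False
  then have "y \<noteq> 0" using norm_pos_on_supp_u[OF in_supp_u[OF False]] by auto
  have "weight y * (norm (grad (\<lambda>y. cmod (u y)) y + (a * cmod (u y) / (norm y)\<^sup>2) *\<^sub>R y))\<^sup>2
      = grad_abs_term y + 2 * a * radial_term y + a\<^sup>2 * (weight y * modsq y / (norm y)\<^sup>2)"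
    using \<open>y \<noteq> 0\<close> unfolding norm_add_scaleR_sq
    by (simp add: grad_abs_term_def radial_term_def modsq_eq field_simps power2_eq_square)
  then have "weight y * (norm (grad (\<lambda>y. cmod (u y)) y + (a * cmod (u y) / (norm y)\<^sup>2) *\<^sub>R y))\<^sup>2
      = grad_abs_term y + 2 * a * radial_term y + a\<^sup>2 * hardy_term y"
    by (simp only: weight_mult_modsq)
  with False show ?thesis unfolding weight_def[symmetric] by simp
qed (simp add: grad_abs_term_def radial_term_def hardy_term_def weight_eq_0)

lemma grad_difference_term_eq:
  "(if u y = 0 then 0 else cmod (u y) powr (p - 2) / norm y powr (2 * (p - 1)) *
      (grad_norm_sq u y - (norm (grad (\<lambda>y. cmod (u y)) y))\<^sup>2))
    = grad_term y - grad_abs_term y"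
  by (simp add: grad_term_def grad_abs_term_def weight_def right_diff_distrib)

lemma integrable_laplacian_powr: "integrable lborel (\<lambda>y. cmod (laplacian u y) powr p)"
proof (rule integrable_compact_support[OF compact_supp_u])
  show "continuous_on supp_u (\<lambda>y. cmod (laplacian u y) powr p)"
    using p_gt_1 by (intro continuous_on_powr' continuous_intros continuous_on_laplacian) auto
qed (simp add: laplacian_eq_0_outside)

lemma rellich_identity:
  assumes "0 \<le> C" "a = (DIM('a) - 2 * p) / p" "C = (p - 1) * a * (a + 2)"
  shows "(\<integral>y. cmod (laplacian u y) powr p \<partial>lborel) =
      C powr p * integral\<^sup>L lborel hardy_term
      + (\<integral>y. cmod (laplacian u y) powr p + (p - 1) * C powr p * hardy_term y
            + p * C powr (p - 1) * lap_term y \<partial>lborel)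
      + p * (p - 1) * C powr (p - 1)
          * (\<integral>y. grad_abs_term y + 2 * a * radial_term y + a\<^sup>2 * hardy_term y \<partial>lborel)
      + p * C powr (p - 1) * (\<integral>y. grad_term y - grad_abs_term y \<partial>lborel)"
proof -
  define G where "G = integral\<^sup>L lborel grad_term"
  define GA where "GA = integral\<^sup>L lborel grad_abs_term"
  define R where "R = integral\<^sup>L lborel radial_term"
  define L where "L = integral\<^sup>L lborel lap_term"
  define H where "H = integral\<^sup>L lborel hardy_term"
  have "R = - a * H"
    using radial_identity p_gt_1 unfolding assms(2) R_def H_def by (simp add: field_simps)
  then have "C * H + L + (p - 1) * (GA + 2 * a * R + a\<^sup>2 * H) + (G - GA)
      = (p - 2) * GA + G + 2 * (1 - p) * R + L"
    unfolding assms(3) by (simp add: algebra_simps power2_eq_square)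
  also have "\<dots> = 0"
    using grad_identity unfolding G_def GA_def R_def L_def .
  finally have bracket: "C * H + L + (p - 1) * (GA + 2 * a * R + a\<^sup>2 * H) + (G - GA) = 0" .
  have "C powr p = C powr (p - 1) * C"
    using mult_powr_eq[OF assms(1), of "p - 1" p] by (simp add: mult.commute)
  then have "C powr p * H + (p - 1) * C powr p * H + p * C powr (p - 1) * L
      + p * (p - 1) * C powr (p - 1) * (GA + 2 * a * R + a\<^sup>2 * H) + p * C powr (p - 1) * (G - GA)
      = p * C powr (p - 1) * (C * H + L + (p - 1) * (GA + 2 * a * R + a\<^sup>2 * H) + (G - GA))"
    by (simp add: algebra_simps)
  with bracket show ?thesis
    using integrable_laplacian_powr integrable_grad_term integrable_grad_abs_term
      integrable_radial_term integrable_lap_term integrable_hardy_term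
    by (simp add: G_def GA_def R_def L_def H_def)
qed

end

theorem corollary4p3:
  fixes u :: "'a::euclidean_space \<Rightarrow> complex" and p :: real
  defines "N \<equiv> real DIM('a)"
  defines "C \<equiv> N * (p - 1) * (N - 2 * p) / p\<^sup>2"
  assumes "1 < p" and "p \<le> N / 2"
    and "C0inf_punctured u"
  defines "f0 \<equiv> (\<lambda>x. cmod (laplacian u x) powr p)"
    and "f1 \<equiv> (\<lambda>x. cmod (u x) powr p / norm x powr (2 * p))"
    and "f2 \<equiv> (\<lambda>x. Cp p (laplacian u x) (laplacian u x + (C / (norm x)\<^sup>2) *\<^sub>R u x))"
    and "f3 \<equiv> (\<lambda>x. if u x = 0 then 0 else
               cmod (u x) powr (p - 2) / norm x powr (2 * (p - 1)) *
               (norm (grad (\<lambda>y. cmod (u y)) x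
                      + ((N - 2 * p) / p * cmod (u x) / (norm x)\<^sup>2) *\<^sub>R x))\<^sup>2)"
    and "f4 \<equiv> (\<lambda>x. if u x = 0 then 0 else
               cmod (u x) powr (p - 2) / norm x powr (2 * (p - 1)) *
               (grad_norm_sq u x - (norm (grad (\<lambda>y. cmod (u y)) x))\<^sup>2))"
  shows "integrable lborel f0 \<and> integrable lborel f1 \<and> integrable lborel f2
       \<and> integrable lborel f3 \<and> integrable lborel f4
       \<and> (LINT x|lborel. f0 x) =
           C powr p * (LINT x|lborel. f1 x) + (LINT x|lborel. f2 x)
           + p * (p - 1) * C powr (p - 1) * (LINT x|lborel. f3 x)
           + p * C powr (p - 1) * (LINT x|lborel. f4 x)"
proof -
  interpret rellich_setting u p
    using \<open>C0inf_punctured u\<close> \<open>1 < p\<close> by unfold_locales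
  define a where "a = (N - 2 * p) / p"
  have "0 \<le> C"
    using \<open>1 < p\<close> \<open>p \<le> N / 2\<close> by (simp add: C_def)
  have "C = (p - 1) * a * (a + 2)"
    using \<open>1 < p\<close> by (simp add: C_def a_def field_simps power2_eq_square)
  have f1: "f1 = hardy_term"
    by (simp add: f1_def hardy_term_def fun_eq_iff)
  have f2: "f2 = (\<lambda>x. f0 x + (p - 1) * C powr p * hardy_term x + p * C powr (p - 1) * lap_term x)"
    using \<open>0 \<le> C\<close> by (simp add: fun_eq_iff f0_def f2_def Cp_add_inverse_square_scaleR
        hardy_term_def lap_term_def weight_def re_lap_def)
  have f3: "f3 = (\<lambda>x. grad_abs_term x + 2 * a * radial_term x + a\<^sup>2 * hardy_term x)"
    unfolding f3_def a_def[symmetric] shifted_grad_term_eq ..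
  have f4: "f4 = (\<lambda>x. grad_term x - grad_abs_term x)"
    unfolding f4_def grad_difference_term_eq ..
  show ?thesis
    unfolding f1 f2 f3 f4 f0_def
    using rellich_identity[OF \<open>0 \<le> C\<close> _ \<open>C = (p - 1) * a * (a + 2)\<close>] a_def N_def
      integrable_laplacian_powr integrable_grad_term integrable_grad_abs_term
      integrable_radial_term integrable_lap_term integrable_hardy_term
    by simp
qed

end
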